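(* Assume (H1)–(H5) and $\mathbb A_n=\mathbb T_n$. Then $\lim_{n\to\infty}\mathbb E[R_2(n)]=0$.
   Context: Let $d\ge1$, $S=\mathbb R^d$ with Borel $\sigma$-field. Binary tree: $\mathbb G_0=\mathbb T_0=\{\emptyset\}$, $\mathbb G_k=\{0,1\}^k$ (so $|\mathbb G_k|=2^k$), $\mathbb T_k=\bigcup_{r\le k}\mathbb G_r$, $\mathbb T=\bigcup_{r\ge0}\mathbb G_r$. Given a probability kernel $\mathcal P$ from $S$ to $S^2$, for $g:S^3\to\mathbb R$ set $\mathcal Pg(y)=\int g(y,y_0,y_1)\mathcal P(y,dy_0,dy_1)$ and for $h:S^2\to\mathbb R$ set $\mathcal Ph(y)=\int h(y_0,y_1)\mathcal P(y,dy_0,dy_1)$. A bifurcating Markov chain (BMC) with initial law $\nu$ and kernel $\mathcal P$ is a process $X=(X_i)_{i\in\mathbb T}$ with values in $S$ such that $X_\emptyset\sim\nu$ and for all $k\ge0$ and bounded measurable $g_i:S^3\to\mathbb R$, $\mathbb E[\prod_{i\in\mathbb G_k}g_i(X_i,X_{i0},X_{i1})\mid\sigma(X_j;j\in\mathbb T_k)]=\prod_{i\in\mathbb G_k}\mathcal Pg_i(X_i)$. Let $P_0(y,A)=\mathcal P(y,A\times S)$, $P_1(y,A)=\mathcal P(y,S\times A)$, $\mathcal Q=\frac12(P_0+P_1)$, $\mathcal Q^n$ its $n$-th iterate, $\langle\lambda,f\rangle=\int f\,d\lambda$. $X$ is a BMC with kernel $\mathcal P$ and initial law $\nu$ satisfying: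 (H1) There is a set $F$ of real measurable functions on $S$ which is a vector space containing the constants, with $f^2\in F$ for $f\in F$, $F\subset L^1(\nu)$, and for $f_0,f_1\in F$, $f_0\otimes f_1$ is $\mathcal P(y,\cdot)$-integrable for every $y$ and $\mathcal P(f_0\otimes f_1)\in F$. (H2) There is a probability measure $\mu$ on $S$ with $F\subset L^1(\mu)$ such that for every $f\in F$, $\mathcal Q^nf\to\langle\mu,f\rangle$ pointwise and there is $g\in F$ with $|\mathcal Q^nf|\le g$ for all $n$; moreover there exist $V\in F$ with $V\ge1$, $\alpha\in(0,1)$ and $M<\infty$ such that $|\mathcal Q^nf-\langle\mu,f\rangle|\le M\alpha^nV$ for all $n\in\mathbb N$ and all measurable $f$ with $|f|\le V$. (H3) $\mathcal P(y,dy_0,dy_1)$ has a Lebesgue density $\mathcal P(y,y_0,y_1)$; then $\mathcal Q$ has density $\mathcal Q(y,z)=\frac12\int(\mathcal P(y,z,w)+\mathcal P(y,w,z))dw$, $\mu$ has a Lebesgue density denoted $\mu(\cdot)$, and $\mu^{\triangle}(y,y_0,y_1)=\mu(y)\mathcal P(y,y_0,y_1)$. (H4) $C_0=\sup_{y,y_0,y_1\in S}(\mu(y)+\mathcal Q(y,y_0)+\mathcal P(y,y_0,y_1))<\infty$. (H5) $h_n=2^{-n\gamma}$ for some $\gamma\in(0,1/(3d))$ with $2\alpha^2<2^{3d\gamma}$; $K_0:\mathbb R^d\to\mathbb R$ is bounded, integrable (hence square integrable) with $\int K_0=1$. Let $K=K_0\otimes K_0\otimes K_0$ on $\mathbb R^{3d}$.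 Fix $(x,x_0,x_1)\in S^3$ with $\mu(x)>0$. Define $f_n(y,y_0,y_1)=h_n^{-3d/2}K(h_n^{-1}(x-y),h_n^{-1}(x_0-y_0),h_n^{-1}(x_1-y_1))$ and $\tilde f_n=f_n-\langle\mu,\mathcal Pf_n\rangle$. Let $(p_n)$ be a non-decreasing sequence of positive integers with $p_n<n$, $p_n/n\to1$, and $n-p_n-\lambda\log n\to+\infty$ for every $\lambda>0$; write $p=p_n$. Define $R_2(n)=|\mathbb G_n|^{-1}\sum_{i\in\mathbb G_{n-p}}\Big(\sum_{k=0}^p2^{p-k}\,\mathcal Q^{p-k}\mathcal P\tilde f_n(X_i)\Big)^2$. *)

theory Defs
  imports "HOL-Probability.Probability"
begin

section \<open>Binary tree indexing: nodes are bool lists, i0 = i @ [False], i1 = i @ [True]\<close>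

definition Gen :: "nat \<Rightarrow> bool list set" where
  "Gen k = {i. length i = k}"

definition Tr :: "nat \<Rightarrow> bool list set" where
  "Tr k = {i. length i \<le> k}"

definition Pmeas :: "('a::euclidean_space \<Rightarrow> 'a \<Rightarrow> 'a \<Rightarrow> real) \<Rightarrow> 'a \<Rightarrow> ('a \<times> 'a) measure" where
  "Pmeas p y = density lborel (\<lambda>z. ennreal (p y (fst z) (snd z)))"

definition Pk :: "('a::euclidean_space \<Rightarrow> 'a \<Rightarrow> 'a \<Rightarrow> real) \<Rightarrow> ('a \<Rightarrow> 'a \<Rightarrow> 'a \<Rightarrow> real) \<Rightarrow> 'a \<Rightarrow> real" where
  "Pk p g y = (\<integral>z. g y (fst z) (snd z) \<partial>Pmeas p y)"

definition Qop :: "('a::euclidean_space \<Rightarrow> 'a \<Rightarrow> 'a \<Rightarrow> real) \<Rightarrow> ('a \<Rightarrow> real) \<Rightarrow> 'a \<Rightarrow> real" where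
  "Qop p f y = (Pk p (\<lambda>_ a _. f a) y + Pk p (\<lambda>_ _ b. f b) y) / 2"

definition qdens :: "('a::euclidean_space \<Rightarrow> 'a \<Rightarrow> 'a \<Rightarrow> real) \<Rightarrow> 'a \<Rightarrow> 'a \<Rightarrow> real" where
  "qdens p y z = (1/2) * (\<integral>w. p y z w + p y w z \<partial>lborel)"

definition mumeas :: "('a::euclidean_space \<Rightarrow> real) \<Rightarrow> 'a measure" where
  "mumeas mu = density lborel (\<lambda>y. ennreal (mu y))"

definition pairing :: "('a::euclidean_space \<Rightarrow> real) \<Rightarrow> ('a \<Rightarrow> real) \<Rightarrow> real" where
  "pairing mu f = (\<integral>y. f y \<partial>mumeas mu)"

text \<open>sigma(X_j; j in T_k), as a sub-sigma-algebra of M\<close>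
definition tree_sigma :: "'w measure \<Rightarrow> (bool list \<Rightarrow> 'w \<Rightarrow> 'a::euclidean_space) \<Rightarrow> nat \<Rightarrow> 'w measure" where
  "tree_sigma M X k = vimage_algebra (space M) (\<lambda>\<omega>. restrict (\<lambda>j. X j \<omega>) (Tr k)) (PiM (Tr k) (\<lambda>_. borel))"

definition BMC :: "'w measure \<Rightarrow> (bool list \<Rightarrow> 'w \<Rightarrow> 'a::euclidean_space) \<Rightarrow> ('a \<Rightarrow> 'a \<Rightarrow> 'a \<Rightarrow> real) \<Rightarrow> 'a measure \<Rightarrow> bool" where
  "BMC M X p \<nu> \<longleftrightarrow> prob_space M \<and> (\<forall>i. X i \<in> borel_measurable M) \<and> distr M borel (X []) = \<nu> \<and>
     (\<forall>k (g :: bool list \<Rightarrow> 'a \<Rightarrow> 'a \<Rightarrow> 'a \<Rightarrow> real).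
        (\<forall>i\<in>Gen k. (\<lambda>(a, b, c). g i a b c) \<in> borel_measurable borel \<and>
                    bounded (range (\<lambda>(a, b, c). g i a b c))) \<longrightarrow>
        (AE \<omega> in M. real_cond_exp M (tree_sigma M X k)
              (\<lambda>\<omega>. \<Prod>i\<in>Gen k. g i (X i \<omega>) (X (i @ [False]) \<omega>) (X (i @ [True]) \<omega>)) \<omega>
            = (\<Prod>i\<in>Gen k. Pk p (g i) (X i \<omega>))))"

definition hn :: "real \<Rightarrow> nat \<Rightarrow> real" where
  "hn \<gamma> n = 2 powr (- (real n * \<gamma>))"

definition fn :: "('a::euclidean_space \<Rightarrow> real) \<Rightarrow> real \<Rightarrow> 'a \<Rightarrow> 'a \<Rightarrow> 'a \<Rightarrow> nat \<Rightarrow> 'a \<Rightarrow> 'a \<Rightarrow> 'a \<Rightarrow> real" where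
  "fn K0 \<gamma> x x0 x1 n y y0 y1 =
     hn \<gamma> n powr (- (3 * real DIM('a)) / 2) *
     (K0 (inverse (hn \<gamma> n) *\<^sub>R (x - y)) * K0 (inverse (hn \<gamma> n) *\<^sub>R (x0 - y0)) *
      K0 (inverse (hn \<gamma> n) *\<^sub>R (x1 - y1)))"

definition ftil :: "('a::euclidean_space \<Rightarrow> 'a \<Rightarrow> 'a \<Rightarrow> real) \<Rightarrow> ('a \<Rightarrow> real) \<Rightarrow> ('a \<Rightarrow> real) \<Rightarrow> real \<Rightarrow> 'a \<Rightarrow> 'a \<Rightarrow> 'a \<Rightarrow> nat \<Rightarrow> 'a \<Rightarrow> 'a \<Rightarrow> 'a \<Rightarrow> real" where
  "ftil p mu K0 \<gamma> x x0 x1 n y y0 y1 =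
     fn K0 \<gamma> x x0 x1 n y y0 y1 - pairing mu (Pk p (fn K0 \<gamma> x x0 x1 n))"

definition R2 :: "(bool list \<Rightarrow> 'w \<Rightarrow> 'a::euclidean_space) \<Rightarrow> ('a \<Rightarrow> 'a \<Rightarrow> 'a \<Rightarrow> real) \<Rightarrow> ('a \<Rightarrow> real) \<Rightarrow> ('a \<Rightarrow> real) \<Rightarrow> real \<Rightarrow> 'a \<Rightarrow> 'a \<Rightarrow> 'a \<Rightarrow> (nat \<Rightarrow> nat) \<Rightarrow> nat \<Rightarrow> 'w \<Rightarrow> real" where
  "R2 X p mu K0 \<gamma> x x0 x1 pp n \<omega> =
     (1 / real (card (Gen n))) *
     (\<Sum>i\<in>Gen (n - pp n).
        (\<Sum>k=0..pp n. 2 ^ (pp n - k) *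
            (Qop p ^^ (pp n - k)) (Pk p (ftil p mu K0 \<gamma> x x0 x1 n)) (X i \<omega>)) ^ 2)"

end

theory Submission
  imports Defs
begin

text \<open>
  Put \<open>\<phi> = P f_n - \<langle>\<mu>, P f_n\<rangle>\<close>. Its sup norm is of order \<open>h_n^(-3d/2)\<close>, but \<open>P f_n\<close>
  has Lebesgue \<open>L\<^sup>1\<close> norm of order \<open>h_n^(3d/2)\<close>; since \<open>Q\<close> and \<open>\<mu>\<close> have bounded densities,
  \<open>Q \<phi>\<close> is then uniformly of order \<open>h_n^(3d/2)\<close>, and \<open>\<langle>\<mu>, Q \<phi>\<rangle> = \<langle>\<mu>, \<phi>\<rangle> = 0\<close>
  because \<open>\<mu>\<close> is invariant. Geometric ergodicity applied to \<open>Q \<phi>\<close> therefore bounds the inner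
  sum of \<open>R_2(n)\<close> by \<open>c_n V\<close> with \<open>c_n\<close> of order \<open>h_n^(-3d/2) + p h_n^(3d/2) max(1, 2\<alpha>)^p\<close>.
  The many-to-one formula \<open>E \<Sum>\<^bsub>i\<in>G_m\<^esub> f(X_i) = 2^m \<langle>\<nu>, Q^m f\<rangle>\<close>, applied to \<open>f = V\<^sup>2\<close>,
  gives \<open>E R_2(n) \<le> c_n\<^sup>2 2^(-p) \<langle>\<nu>, g\<rangle>\<close> with \<open>g\<close> dominating all \<open>Q^m V\<^sup>2\<close>. Finally
  \<open>h_n^(-3d) 2^(-p) = 2^(3d\<gamma>n - p) \<rightarrow> 0\<close> because \<open>p/n \<rightarrow> 1\<close> and \<open>3d\<gamma> < 1\<close>, while the
  second part of \<open>c_n\<^sup>2 2^(-p)\<close> is at most \<open>n\<^sup>2 (max(1, 2\<alpha>\<^sup>2) 2^(-3d\<gamma>))^n \<rightarrow> 0\<close> because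
  \<open>2\<alpha>\<^sup>2 < 2^(3d\<gamma>)\<close>.
\<close>

lemma borel_measurable_fst[measurable]:
  "fst \<in> borel_measurable (borel :: ('a::second_countable_topology \<times> 'b::second_countable_topology) measure)"
  by (rule borel_measurable_continuous_on[where f=fst]) (auto intro: continuous_intros)

lemma borel_measurable_snd[measurable]:
  "snd \<in> borel_measurable (borel :: ('a::second_countable_topology \<times> 'b::second_countable_topology) measure)"
  by (rule borel_measurable_continuous_on[where f=snd]) (auto intro: continuous_intros)

lemma measurable_compose_3:
  fixes f g h :: "'m \<Rightarrow> 'a::euclidean_space"
  assumes "(\<lambda>(y, y0, y1). q y y0 y1) \<in> borel_measurable borel"
    and [measurable]: "f \<in> borel_measurable M" "g \<in> borel_measurable M" "h \<in> borel_measurable M"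
  shows "(\<lambda>x. q (f x) (g x) (h x)) \<in> borel_measurable M"
proof -
  have "(\<lambda>x. (f x, g x, h x)) \<in> borel_measurable M" by measurable
  from measurable_compose[OF this assms(1)] show ?thesis by simp
qed

section \<open>Kernels with a bounded density\<close>

locale bounded_density_kernel =
  fixes p :: "'a::euclidean_space \<Rightarrow> 'a \<Rightarrow> 'a \<Rightarrow> real" and mu :: "'a \<Rightarrow> real" and C0 :: real
  assumes p_nonneg: "\<And>y y0 y1. 0 \<le> p y y0 y1"
    and p_meas: "(\<lambda>(y, y0, y1). p y y0 y1) \<in> borel_measurable borel"
    and p_prob: "\<And>y. prob_space (Pmeas p y)"
    and mu_nonneg: "\<And>y. 0 \<le> mu y"
    and mu_meas[measurable]: "mu \<in> borel_measurable borel"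
    and mu_prob: "prob_space (mumeas mu)"
    and H4: "\<And>y y0 y1. mu y + qdens p y y0 + p y y0 y1 \<le> C0"
begin

lemma borel_measurable_p[measurable (raw)]:
  "f \<in> borel_measurable M \<Longrightarrow> g \<in> borel_measurable M \<Longrightarrow> h \<in> borel_measurable M \<Longrightarrow>
   (\<lambda>x. p (f x) (g x) (h x)) \<in> borel_measurable M"
  using measurable_compose_3[OF p_meas] by blast

lemma sets_Pmeas[simp]: "sets (Pmeas p y) = sets borel"
  and space_Pmeas[simp]: "space (Pmeas p y) = UNIV"
  and sets_mumeas[simp]: "sets (mumeas mu) = sets borel"
  by (simp_all add: Pmeas_def mumeas_def)

lemma qdens_nonneg: "0 \<le> qdens p y z"
  unfolding qdens_def by (auto intro!: integral_nonneg_AE simp: p_nonneg add_nonneg_nonneg)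

lemma mu_le_C0: "mu y \<le> C0"
  and qdens_le_C0: "qdens p y z \<le> C0"
  and p_le_C0: "p y a b \<le> C0"
  using H4[of y z b] H4[of y a b] H4[of y z z] p_nonneg[of y z b] p_nonneg[of y a b]
    qdens_nonneg[of y z] qdens_nonneg[of y a] mu_nonneg[of y]
  by linarith+

lemma C0_nonneg: "0 \<le> C0"
  using mu_le_C0[of 0] mu_nonneg[of 0] by linarith

lemma nn_integral_p_eq_1: "(\<integral>\<^sup>+z. ennreal (p y (fst z) (snd z)) \<partial>lborel) = 1"
proof -
  interpret prob_space "Pmeas p y" by (rule p_prob)
  have "emeasure (Pmeas p y) UNIV = (\<integral>\<^sup>+z. ennreal (p y (fst z) (snd z)) * indicator UNIV z \<partial>lborel)"
    unfolding Pmeas_def by (rule emeasure_density) simp_all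
  then show ?thesis using emeasure_space_1 by simp
qed

lemma Pk_abs_le_nn_integral:
  fixes g :: "'a \<Rightarrow> 'a \<Rightarrow> 'a \<Rightarrow> real"
  assumes [measurable]: "(\<lambda>z. g y (fst z) (snd z)) \<in> borel_measurable borel"
  shows "ennreal \<bar>Pk p g y\<bar> \<le> (\<integral>\<^sup>+z. ennreal (p y (fst z) (snd z)) * ennreal \<bar>g y (fst z) (snd z)\<bar> \<partial>lborel)"
proof (cases "integrable (Pmeas p y) (\<lambda>z. g y (fst z) (snd z))")
  case True
  have "ennreal \<bar>Pk p g y\<bar> \<le> (\<integral>\<^sup>+z. ennreal (norm (g y (fst z) (snd z))) \<partial>Pmeas p y)"
    unfolding Pk_def using integral_norm_bound_ennreal[OF True] by simp
  also have "\<dots> = (\<integral>\<^sup>+z. ennreal (p y (fst z) (snd z)) * ennreal \<bar>g y (fst z) (snd z)\<bar> \<partial>lborel)"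
    unfolding Pmeas_def by (subst nn_integral_density) (simp_all, measurable)
  finally show ?thesis .
next
  case False
  then show ?thesis by (simp add: Pk_def not_integrable_integral_eq)
qed

lemma integrable_Pmeas_bounded:
  fixes g :: "'a \<Rightarrow> 'a \<Rightarrow> 'a \<Rightarrow> real"
  assumes [measurable]: "(\<lambda>z. g y (fst z) (snd z)) \<in> borel_measurable borel"
    and "\<And>a b. \<bar>g y a b\<bar> \<le> B"
  shows "integrable (Pmeas p y) (\<lambda>z. g y (fst z) (snd z))"
proof -
  interpret prob_space "Pmeas p y" by (rule p_prob)
  have "(\<lambda>z. g y (fst z) (snd z)) \<in> borel_measurable (Pmeas p y)"
    by (subst measurable_cong_sets[OF sets_Pmeas refl]) (rule assms)
  then show ?thesis by (intro integrable_const_bound[where B=B]) (auto simp: assms(2))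
qed

lemma Pk_abs_le:
  fixes g :: "'a \<Rightarrow> 'a \<Rightarrow> 'a \<Rightarrow> real"
  assumes [measurable]: "(\<lambda>z. g y (fst z) (snd z)) \<in> borel_measurable borel"
    and B: "\<And>a b. \<bar>g y a b\<bar> \<le> B"
  shows "\<bar>Pk p g y\<bar> \<le> B"
proof -
  interpret prob_space "Pmeas p y" by (rule p_prob)
  have "\<bar>Pk p g y\<bar> \<le> (\<integral>z. \<bar>g y (fst z) (snd z)\<bar> \<partial>Pmeas p y)"
    unfolding Pk_def by (rule integral_abs_bound)
  also have "\<dots> \<le> (\<integral>z. B \<partial>Pmeas p y)"
    by (intro integral_mono integrable_abs integrable_Pmeas_bounded[of g y B, OF assms]) (auto simp: B)
  also have "\<dots> = B" using prob_space by simp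
  finally show ?thesis .
qed

lemma Pk_diff_const:
  fixes g :: "'a \<Rightarrow> 'a \<Rightarrow> 'a \<Rightarrow> real"
  assumes [measurable]: "(\<lambda>z. g y (fst z) (snd z)) \<in> borel_measurable borel"
    and B: "\<And>a b. \<bar>g y a b\<bar> \<le> B"
  shows "Pk p (\<lambda>y a b. g y a b - c) y = Pk p g y - c"
proof -
  interpret prob_space "Pmeas p y" by (rule p_prob)
  have "Pk p (\<lambda>y a b. g y a b - c) y = Pk p g y - (\<integral>z. c \<partial>Pmeas p y)"
    unfolding Pk_def
    by (rule Bochner_Integration.integral_diff[OF integrable_Pmeas_bounded[of g y B, OF assms] integrable_const])
  then show ?thesis using prob_space by simp
qed

lemma Pk_const[simp]: "Pk p (\<lambda>_ _ _. c) y = c"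
  using prob_space.prob_space[OF p_prob[of y]] by (simp add: Pk_def)

lemma Pk_cmult: "Pk p (\<lambda>y a b. c * g y a b) y = c * Pk p g y"
  unfolding Pk_def by simp

lemma borel_measurable_Pk:
  fixes g :: "'a \<Rightarrow> 'a \<Rightarrow> 'a \<Rightarrow> real"
  assumes g_meas: "(\<lambda>(y, y0, y1). g y y0 y1) \<in> borel_measurable borel"
  shows "Pk p g \<in> borel_measurable borel"
proof -
  have gy: "(\<lambda>z. g y (fst z) (snd z)) \<in> borel_measurable borel" for y
    by (rule measurable_compose_3[OF g_meas]) measurable
  have Pk_eq: "Pk p g = (\<lambda>y. \<integral>z. p y (fst z) (snd z) * g y (fst z) (snd z) \<partial>lborel)"
    unfolding Pk_def Pmeas_def by (intro ext, subst integral_density) (simp_all add: gy p_nonneg)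
  have "sets (borel \<Otimes>\<^sub>M lborel) = sets (borel :: ('a \<times> 'a \<times> 'a) measure)"
    by (metis borel_prod sets_lborel sets_pair_measure_cong)
  moreover have "(\<lambda>(y, y0, y1). p y y0 y1 * g y y0 y1) \<in> borel_measurable borel"
    using p_meas g_meas by (simp add: case_prod_beta')
  ultimately have "(\<lambda>(y, z). p y (fst z) (snd z) * g y (fst z) (snd z)) \<in> borel_measurable (borel \<Otimes>\<^sub>M lborel)"
    by (simp add: case_prod_beta' cong: measurable_cong_sets)
  then show ?thesis unfolding Pk_eq
    by (intro lborel.borel_measurable_lebesgue_integral) (simp add: case_prod_beta')
qed

lemma nn_integral_marginals_eq_1:
  "(\<integral>\<^sup>+a. (\<integral>\<^sup>+w. ennreal (p y a w) \<partial>lborel) \<partial>lborel) = 1"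
  "(\<integral>\<^sup>+a. (\<integral>\<^sup>+w. ennreal (p y w a) \<partial>lborel) \<partial>lborel) = 1"
proof -
  have m: "(\<lambda>z. ennreal (p y (fst z) (snd z))) \<in> borel_measurable (lborel \<Otimes>\<^sub>M lborel)"
    by measurable
  show "(\<integral>\<^sup>+a. (\<integral>\<^sup>+w. ennreal (p y a w) \<partial>lborel) \<partial>lborel) = 1"
    using lborel.nn_integral_fst[OF m] nn_integral_p_eq_1[of y] by (simp add: lborel_prod)
  show "(\<integral>\<^sup>+a. (\<integral>\<^sup>+w. ennreal (p y w a) \<partial>lborel) \<partial>lborel) = 1"
    using lborel_pair.nn_integral_snd[OF m] nn_integral_p_eq_1[of y] by (simp add: lborel_prod)
qed

text \<open>The two marginal densities of \<open>P(y, \<cdot>)\<close> sum to \<open>2 Q(y, \<cdot>) \<le> 2 C0\<close>.\<close>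

lemma AE_marginals_le:
  "AE a in lborel. (\<integral>\<^sup>+w. ennreal (p y a w) \<partial>lborel) \<le> ennreal (2 * C0) \<and>
                   (\<integral>\<^sup>+w. ennreal (p y w a) \<partial>lborel) \<le> ennreal (2 * C0)"
proof -
  have "AE a in lborel. (\<integral>\<^sup>+w. ennreal (p y a w) \<partial>lborel) \<noteq> \<infinity>"
    by (rule nn_integral_PInf_AE) (measurable, simp add: nn_integral_marginals_eq_1)
  moreover have "AE a in lborel. (\<integral>\<^sup>+w. ennreal (p y w a) \<partial>lborel) \<noteq> \<infinity>"
    by (rule nn_integral_PInf_AE) (measurable, simp add: nn_integral_marginals_eq_1)
  ultimately show ?thesis
  proof eventually_elim
    case (elim a)
    have i1: "integrable lborel (\<lambda>w. p y a w)" and i2: "integrable lborel (\<lambda>w. p y w a)"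
      using elim by (auto intro!: integrableI_nonneg simp: p_nonneg less_top)
    have e1: "(\<integral>\<^sup>+w. ennreal (p y a w) \<partial>lborel) = ennreal (\<integral>w. p y a w \<partial>lborel)"
      and e2: "(\<integral>\<^sup>+w. ennreal (p y w a) \<partial>lborel) = ennreal (\<integral>w. p y w a \<partial>lborel)"
      by (simp_all add: nn_integral_eq_integral i1 i2 p_nonneg)
    have "qdens p y a = ((\<integral>w. p y a w \<partial>lborel) + (\<integral>w. p y w a \<partial>lborel)) / 2"
      unfolding qdens_def by (simp add: Bochner_Integration.integral_add[OF i1 i2])
    moreover have "0 \<le> (\<integral>w. p y a w \<partial>lborel)" "0 \<le> (\<integral>w. p y w a \<partial>lborel)"
      by (auto intro!: integral_nonneg_AE simp: p_nonneg)
    ultimately show ?case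
      unfolding e1 e2 using qdens_le_C0[of y a] by (auto intro!: ennreal_leI)
  qed
qed

lemma Pk_marginal_abs_le_L1:
  fixes u :: "'a \<Rightarrow> real"
  assumes [measurable]: "u \<in> borel_measurable borel"
  shows "ennreal \<bar>Pk p (\<lambda>_ a _. u a) y\<bar> \<le> ennreal (2 * C0) * (\<integral>\<^sup>+a. ennreal \<bar>u a\<bar> \<partial>lborel)"
    and "ennreal \<bar>Pk p (\<lambda>_ _ b. u b) y\<bar> \<le> ennreal (2 * C0) * (\<integral>\<^sup>+a. ennreal \<bar>u a\<bar> \<partial>lborel)"
proof -
  have m1: "(\<lambda>z. ennreal (p y (fst z) (snd z)) * ennreal \<bar>u (fst z)\<bar>) \<in> borel_measurable (lborel \<Otimes>\<^sub>M lborel)"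
    and m2: "(\<lambda>z. ennreal (p y (fst z) (snd z)) * ennreal \<bar>u (snd z)\<bar>) \<in> borel_measurable (lborel \<Otimes>\<^sub>M lborel)"
    by measurable
  have "ennreal \<bar>Pk p (\<lambda>_ a _. u a) y\<bar> \<le> (\<integral>\<^sup>+z. ennreal (p y (fst z) (snd z)) * ennreal \<bar>u (fst z)\<bar> \<partial>lborel)"
    using Pk_abs_le_nn_integral[of "\<lambda>_ a _. u a" y] by simp
  also have "\<dots> = (\<integral>\<^sup>+a. (\<integral>\<^sup>+w. ennreal (p y a w) \<partial>lborel) * ennreal \<bar>u a\<bar> \<partial>lborel)"
    using lborel.nn_integral_fst[OF m1] by (simp add: lborel_prod nn_integral_multc)
  also have "\<dots> \<le> (\<integral>\<^sup>+a. ennreal (2 * C0) * ennreal \<bar>u a\<bar> \<partial>lborel)"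
    by (rule nn_integral_mono_AE) (use AE_marginals_le[of y] in \<open>eventually_elim, auto intro: mult_right_mono\<close>)
  finally show "ennreal \<bar>Pk p (\<lambda>_ a _. u a) y\<bar> \<le> ennreal (2 * C0) * (\<integral>\<^sup>+a. ennreal \<bar>u a\<bar> \<partial>lborel)"
    by (simp add: nn_integral_cmult)
  have "ennreal \<bar>Pk p (\<lambda>_ _ b. u b) y\<bar> \<le> (\<integral>\<^sup>+z. ennreal (p y (fst z) (snd z)) * ennreal \<bar>u (snd z)\<bar> \<partial>lborel)"
    using Pk_abs_le_nn_integral[of "\<lambda>_ _ b. u b" y] by simp
  also have "\<dots> = (\<integral>\<^sup>+a. (\<integral>\<^sup>+w. ennreal (p y w a) \<partial>lborel) * ennreal \<bar>u a\<bar> \<partial>lborel)"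
    using lborel_pair.nn_integral_snd[OF m2] by (simp add: lborel_prod nn_integral_multc)
  also have "\<dots> \<le> (\<integral>\<^sup>+a. ennreal (2 * C0) * ennreal \<bar>u a\<bar> \<partial>lborel)"
    by (rule nn_integral_mono_AE) (use AE_marginals_le[of y] in \<open>eventually_elim, auto intro: mult_right_mono\<close>)
  finally show "ennreal \<bar>Pk p (\<lambda>_ _ b. u b) y\<bar> \<le> ennreal (2 * C0) * (\<integral>\<^sup>+a. ennreal \<bar>u a\<bar> \<partial>lborel)"
    by (simp add: nn_integral_cmult)
qed

lemma Qop_abs_le_L1:
  fixes u :: "'a \<Rightarrow> real"
  assumes [measurable]: "u \<in> borel_measurable borel"
    and I: "(\<integral>\<^sup>+a. ennreal \<bar>u a\<bar> \<partial>lborel) \<le> ennreal I" and "0 \<le> I"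
  shows "\<bar>Qop p u y\<bar> \<le> 2 * C0 * I"
proof -
  have "ennreal (2 * C0) * (\<integral>\<^sup>+a. ennreal \<bar>u a\<bar> \<partial>lborel) \<le> ennreal (2 * C0 * I)"
    using mult_left_mono[OF I] C0_nonneg \<open>0 \<le> I\<close> by (simp add: ennreal_mult)
  with Pk_marginal_abs_le_L1[OF assms(1), of y]
  have "\<bar>Pk p (\<lambda>_ a _. u a) y\<bar> \<le> 2 * C0 * I" "\<bar>Pk p (\<lambda>_ _ b. u b) y\<bar> \<le> 2 * C0 * I"
    using C0_nonneg \<open>0 \<le> I\<close> by (auto dest: order.trans)
  then show ?thesis unfolding Qop_def by (simp add: abs_le_iff)
qed

lemma pairing_abs_le_L1:
  fixes u :: "'a \<Rightarrow> real"
  assumes [measurable]: "u \<in> borel_measurable borel"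
    and I: "(\<integral>\<^sup>+a. ennreal \<bar>u a\<bar> \<partial>lborel) \<le> ennreal I" and "0 \<le> I"
  shows "\<bar>pairing mu u\<bar> \<le> C0 * I"
proof (cases "integrable (mumeas mu) u")
  case True
  have "ennreal \<bar>pairing mu u\<bar> \<le> (\<integral>\<^sup>+a. ennreal (norm (u a)) \<partial>mumeas mu)"
    unfolding pairing_def using integral_norm_bound_ennreal[OF True] by simp
  also have "\<dots> = (\<integral>\<^sup>+a. ennreal (mu a) * ennreal \<bar>u a\<bar> \<partial>lborel)"
    unfolding mumeas_def by (subst nn_integral_density) (simp_all, measurable)
  also have "\<dots> \<le> (\<integral>\<^sup>+a. ennreal C0 * ennreal \<bar>u a\<bar> \<partial>lborel)"
    by (intro nn_integral_mono mult_right_mono) (auto simp: mu_le_C0 ennreal_leI)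
  also have "\<dots> = ennreal C0 * (\<integral>\<^sup>+a. ennreal \<bar>u a\<bar> \<partial>lborel)"
    by (rule nn_integral_cmult) measurable
  also have "\<dots> \<le> ennreal (C0 * I)"
    using mult_left_mono[OF I] C0_nonneg \<open>0 \<le> I\<close> by (simp add: ennreal_mult)
  finally show ?thesis using C0_nonneg \<open>0 \<le> I\<close> by simp
next
  case False
  then show ?thesis
    using \<open>0 \<le> I\<close> C0_nonneg by (simp add: pairing_def not_integrable_integral_eq)
qed

lemma Qop_cmult: "Qop p (\<lambda>y. c * f y) = (\<lambda>y. c * Qop p f y)"
  unfolding Qop_def using Pk_cmult[of c "\<lambda>_ a _. f a"] Pk_cmult[of c "\<lambda>_ _ b. f b"]
  by (simp add: algebra_simps add_divide_distrib)

lemma Qop_funpow_cmult: "(Qop p ^^ n) (\<lambda>y. c * f y) = (\<lambda>y. c * (Qop p ^^ n) f y)"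
  by (induction n) (simp_all add: Qop_cmult)

lemma pairing_cmult: "pairing mu (\<lambda>y. c * f y) = c * pairing mu f"
  unfolding pairing_def by simp

lemma borel_measurable_Qop:
  fixes u :: "'a \<Rightarrow> real"
  assumes [measurable]: "u \<in> borel_measurable borel"
  shows "Qop p u \<in> borel_measurable borel"
proof -
  have "Pk p (\<lambda>_ a _. u a) \<in> borel_measurable borel" "Pk p (\<lambda>_ _ b. u b) \<in> borel_measurable borel"
    by (rule borel_measurable_Pk, simp add: case_prod_beta', measurable)+
  then show ?thesis unfolding Qop_def[abs_def] by measurable
qed

lemma borel_measurable_Qop_funpow:
  fixes u :: "'a \<Rightarrow> real"
  assumes "u \<in> borel_measurable borel"
  shows "(Qop p ^^ n) u \<in> borel_measurable borel"
  by (induction n) (simp_all add: assms borel_measurable_Qop)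

lemma Qop_abs_le:
  fixes u :: "'a \<Rightarrow> real"
  assumes [measurable]: "u \<in> borel_measurable borel" and "\<And>z. \<bar>u z\<bar> \<le> S"
  shows "\<bar>Qop p u y\<bar> \<le> S"
proof -
  have "\<bar>Pk p (\<lambda>_ a _. u a) y\<bar> \<le> S" "\<bar>Pk p (\<lambda>_ _ b. u b) y\<bar> \<le> S"
    by (rule Pk_abs_le, measurable, simp add: assms(2))+
  then show ?thesis unfolding Qop_def by (simp add: abs_le_iff)
qed

lemma Qop_funpow_abs_le:
  fixes u :: "'a \<Rightarrow> real"
  assumes "u \<in> borel_measurable borel" and "\<And>z. \<bar>u z\<bar> \<le> S"
  shows "\<bar>(Qop p ^^ n) u y\<bar> \<le> S"
  by (induction n arbitrary: y)
    (simp_all add: assms Qop_abs_le[OF borel_measurable_Qop_funpow[OF assms(1)]])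

lemma Qop_diff_const:
  fixes u :: "'a \<Rightarrow> real"
  assumes [measurable]: "u \<in> borel_measurable borel" and "\<And>z. \<bar>u z\<bar> \<le> S"
  shows "Qop p (\<lambda>y. u y - c) y = Qop p u y - c"
proof -
  have "Pk p (\<lambda>_ a _. u a - c) y = Pk p (\<lambda>_ a _. u a) y - c"
    and "Pk p (\<lambda>_ _ b. u b - c) y = Pk p (\<lambda>_ _ b. u b) y - c"
    by (rule Pk_diff_const[where B=S, simplified], measurable, simp add: assms(2))+
  then show ?thesis unfolding Qop_def by (simp add: field_simps)
qed

lemma Qop_mono:
  fixes u w :: "'a \<Rightarrow> real"
  assumes [measurable]: "u \<in> borel_measurable borel" and S: "\<And>z. \<bar>u z\<bar> \<le> S"
    and le: "\<And>z. u z \<le> w z"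
    and w0: "\<And>y. integrable (Pmeas p y) (\<lambda>z. w (fst z))"
    and w1: "\<And>y. integrable (Pmeas p y) (\<lambda>z. w (snd z))"
  shows "Qop p u y \<le> Qop p w y"
proof -
  have "Pk p (\<lambda>_ a _. u a) y \<le> Pk p (\<lambda>_ a _. w a) y"
    unfolding Pk_def
    by (rule integral_mono[OF integrable_Pmeas_bounded[of "\<lambda>_ a _. u a" y S] w0]) (auto simp: S le)
  moreover have "Pk p (\<lambda>_ _ b. u b) y \<le> Pk p (\<lambda>_ _ b. w b) y"
    unfolding Pk_def
    by (rule integral_mono[OF integrable_Pmeas_bounded[of "\<lambda>_ _ b. u b" y S] w1]) (auto simp: S le)
  ultimately show ?thesis unfolding Qop_def by simp
qed

lemma pairing_abs_le:
  fixes u :: "'a \<Rightarrow> real"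
  assumes "u \<in> borel_measurable borel" and S: "\<And>z. \<bar>u z\<bar> \<le> S"
  shows "\<bar>pairing mu u\<bar> \<le> S"
proof -
  interpret prob_space "mumeas mu" by (rule mu_prob)
  have ui: "integrable (mumeas mu) u"
    using assms by (intro integrable_const_bound[where B=S]) (auto cong: measurable_cong_sets)
  have "\<bar>pairing mu u\<bar> \<le> (\<integral>z. \<bar>u z\<bar> \<partial>mumeas mu)"
    unfolding pairing_def by (rule integral_abs_bound)
  also have "\<dots> \<le> (\<integral>z. S \<partial>mumeas mu)"
    by (intro integral_mono integrable_abs ui) (auto simp: S)
  also have "\<dots> = S" using prob_space by simp
  finally show ?thesis .
qed

lemma pairing_diff_const:
  fixes u :: "'a \<Rightarrow> real"
  assumes "u \<in> borel_measurable borel" and S: "\<And>z. \<bar>u z\<bar> \<le> S"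
  shows "pairing mu (\<lambda>y. u y - c) = pairing mu u - c"
proof -
  interpret prob_space "mumeas mu" by (rule mu_prob)
  have ui: "integrable (mumeas mu) u"
    using assms by (intro integrable_const_bound[where B=S]) (auto cong: measurable_cong_sets)
  have "pairing mu (\<lambda>y. u y - c) = pairing mu u - (\<integral>z. c \<partial>mumeas mu)"
    unfolding pairing_def by (rule Bochner_Integration.integral_diff[OF ui integrable_const])
  then show ?thesis using prob_space by simp
qed

end

section \<open>The rescaled kernel\<close>

lemma nn_integral_abs_rescaled:
  fixes K0 :: "'a::euclidean_space \<Rightarrow> real"
  assumes [measurable]: "K0 \<in> borel_measurable borel" and h: "0 < h"
  shows "(\<integral>\<^sup>+a. ennreal \<bar>K0 (inverse h *\<^sub>R (x - a))\<bar> \<partial>lborel) = ennreal (h ^ DIM('a)) * (\<integral>\<^sup>+u. ennreal \<bar>K0 u\<bar> \<partial>lborel)"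
proof -
  have m: "(\<lambda>a. ennreal \<bar>K0 (inverse h *\<^sub>R (x - a))\<bar>) \<in> borel_measurable borel" by measurable
  have "(\<integral>\<^sup>+a. ennreal \<bar>K0 (inverse h *\<^sub>R (x - a))\<bar> \<partial>lborel) =
        (\<integral>\<^sup>+a. ennreal \<bar>K0 (inverse h *\<^sub>R (x - a))\<bar> \<partial>density (distr lborel borel (\<lambda>u. x + (- h) *\<^sub>R u)) (\<lambda>_. \<bar>- h\<bar> ^ DIM('a)))"
    using lborel_affine[of "- h" x] h by simp
  also have "\<dots> = (\<integral>\<^sup>+u. \<bar>- h\<bar> ^ DIM('a) * ennreal \<bar>K0 (inverse h *\<^sub>R (x - (x + (- h) *\<^sub>R u)))\<bar> \<partial>lborel)"
    by (simp add: nn_integral_density nn_integral_distr m)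
  also have "\<dots> = (\<integral>\<^sup>+u. ennreal (h ^ DIM('a)) * ennreal \<bar>K0 u\<bar> \<partial>lborel)"
    using h by (intro nn_integral_cong) (simp add: ennreal_power)
  finally show ?thesis by (simp add: nn_integral_cmult)
qed

lemma nn_integral_abs_rescaled_pair:
  fixes K0 :: "'a::euclidean_space \<Rightarrow> real"
  assumes [measurable]: "K0 \<in> borel_measurable borel" and h: "0 < h" and "integrable lborel K0"
  shows "(\<integral>\<^sup>+z. ennreal \<bar>K0 (inverse h *\<^sub>R (x0 - fst z))\<bar> * ennreal \<bar>K0 (inverse h *\<^sub>R (x1 - snd z))\<bar> \<partial>lborel)
         = ennreal ((h ^ DIM('a) * (\<integral>u. \<bar>K0 u\<bar> \<partial>lborel))\<^sup>2)"
proof -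
  let ?L = "\<integral>u. \<bar>K0 u\<bar> \<partial>lborel"
  have L0: "0 \<le> ?L" by (rule integral_nonneg_AE) simp
  have rescaled: "(\<integral>\<^sup>+a. ennreal \<bar>K0 (inverse h *\<^sub>R (y - a))\<bar> \<partial>lborel) = ennreal (h ^ DIM('a) * ?L)" for y
    using nn_integral_abs_rescaled[OF assms(1) h, of y] h L0
    by (simp add: nn_integral_eq_integral \<open>integrable lborel K0\<close> ennreal_mult)
  have m: "(\<lambda>z. ennreal \<bar>K0 (inverse h *\<^sub>R (x0 - fst z))\<bar> * ennreal \<bar>K0 (inverse h *\<^sub>R (x1 - snd z))\<bar>)
             \<in> borel_measurable (lborel \<Otimes>\<^sub>M lborel)"
    by measurable
  have "(\<integral>\<^sup>+z. ennreal \<bar>K0 (inverse h *\<^sub>R (x0 - fst z))\<bar> * ennreal \<bar>K0 (inverse h *\<^sub>R (x1 - snd z))\<bar> \<partial>lborel)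
     = (\<integral>\<^sup>+b. ennreal \<bar>K0 (inverse h *\<^sub>R (x0 - b))\<bar> * ennreal (h ^ DIM('a) * ?L) \<partial>lborel)"
    using lborel.nn_integral_fst[OF m] by (simp add: lborel_prod nn_integral_cmult rescaled)
  also have "\<dots> = ennreal (h ^ DIM('a) * ?L) * ennreal (h ^ DIM('a) * ?L)"
    by (simp add: nn_integral_multc rescaled)
  also have "\<dots> = ennreal ((h ^ DIM('a) * ?L)\<^sup>2)"
    using h L0 by (simp add: ennreal_mult[symmetric] power2_eq_square)
  finally show ?thesis .
qed

lemma hn_pos: "0 < hn \<gamma> n"
  unfolding hn_def by simp

lemma hn_powr: "hn \<gamma> n powr t = 2 powr (- (\<gamma> * real n * t))"
  unfolding hn_def by (simp add: powr_powr mult_ac)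

lemma borel_measurable_fn:
  fixes K0 :: "'a::euclidean_space \<Rightarrow> real"
  assumes [measurable]: "K0 \<in> borel_measurable borel"
  shows "(\<lambda>(y, a, b). fn K0 \<gamma> x x0 x1 n y a b) \<in> borel_measurable borel"
    and "(\<lambda>z. fn K0 \<gamma> x x0 x1 n y (fst z) (snd z)) \<in> borel_measurable borel"
  unfolding fn_def case_prod_beta' by measurable

lemma fn_abs_le:
  fixes K0 :: "'a::euclidean_space \<Rightarrow> real"
  assumes B: "\<And>u. \<bar>K0 u\<bar> \<le> B"
  shows "\<bar>fn K0 \<gamma> x x0 x1 n y a b\<bar> \<le> hn \<gamma> n powr (- (3 * real DIM('a)) / 2) * B ^ 3"
proof -
  have B0: "0 \<le> B" using B[of 0] by linarith
  have "\<bar>K0 (inverse (hn \<gamma> n) *\<^sub>R (x - y)) * K0 (inverse (hn \<gamma> n) *\<^sub>R (x0 - a)) * K0 (inverse (hn \<gamma> n) *\<^sub>R (x1 - b))\<bar> \<le> B * B * B"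
    unfolding abs_mult by (intro mult_mono B) (auto simp: B0)
  then show ?thesis unfolding fn_def abs_mult
    by (auto intro!: mult_left_mono simp: power3_eq_cube)
qed

context bounded_density_kernel
begin

text \<open>Integrating \<open>p \<le> C0\<close> against the three rescaled kernels gains \<open>h_n^d\<close> for each of them,
  against the normalisation \<open>h_n^(-3d/2)\<close> of \<open>f_n\<close>.\<close>

lemma nn_integral_abs_Pk_fn_le:
  fixes K0 :: "'a \<Rightarrow> real"
  assumes [measurable]: "K0 \<in> borel_measurable borel" and K0_int: "integrable lborel K0"
  shows "(\<integral>\<^sup>+a. ennreal \<bar>Pk p (fn K0 \<gamma> x x0 x1 n) a\<bar> \<partial>lborel)
       \<le> ennreal (C0 * (\<integral>u. \<bar>K0 u\<bar> \<partial>lborel) ^ 3 * hn \<gamma> n powr (3 * real DIM('a) / 2))"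
proof -
  let ?h = "hn \<gamma> n" and ?d = "DIM('a)"
  let ?L = "\<integral>u. \<bar>K0 u\<bar> \<partial>lborel" and ?H = "hn \<gamma> n powr (- (3 * real DIM('a)) / 2)"
  let ?K = "\<lambda>c a. \<bar>K0 (inverse ?h *\<^sub>R (c - a))\<bar>"
  have h: "0 < ?h" by (rule hn_pos)
  have L: "(\<integral>\<^sup>+u. ennreal \<bar>K0 u\<bar> \<partial>lborel) = ennreal ?L"
    by (rule nn_integral_eq_integral) (auto intro: integrable_abs[OF K0_int])
  have L0: "0 \<le> ?L" by (rule integral_nonneg_AE) simp
  have pointwise: "ennreal \<bar>Pk p (fn K0 \<gamma> x x0 x1 n) a\<bar> \<le> ennreal (C0 * ?H * (?h ^ ?d * ?L)\<^sup>2) * ennreal (?K x a)" for a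
  proof -
    have integrand_le: "ennreal (p a (fst z) (snd z)) * ennreal \<bar>fn K0 \<gamma> x x0 x1 n a (fst z) (snd z)\<bar>
          \<le> ennreal (C0 * ?H * ?K x a) * (ennreal (?K x0 (fst z)) * ennreal (?K x1 (snd z)))" for z
    proof -
      have "p a (fst z) (snd z) * \<bar>fn K0 \<gamma> x x0 x1 n a (fst z) (snd z)\<bar> \<le> C0 * \<bar>fn K0 \<gamma> x x0 x1 n a (fst z) (snd z)\<bar>"
        by (intro mult_right_mono p_le_C0) simp
      also have "\<dots> = (C0 * ?H * ?K x a) * (?K x0 (fst z) * ?K x1 (snd z))"
        unfolding fn_def abs_mult by simp
      finally show ?thesis
        using C0_nonneg p_nonneg by (simp add: ennreal_mult[symmetric] ennreal_leI)
    qed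
    have "ennreal \<bar>Pk p (fn K0 \<gamma> x x0 x1 n) a\<bar>
        \<le> (\<integral>\<^sup>+z. ennreal (C0 * ?H * ?K x a) * (ennreal (?K x0 (fst z)) * ennreal (?K x1 (snd z))) \<partial>lborel)"
      by (rule order.trans[OF Pk_abs_le_nn_integral[OF borel_measurable_fn(2)[OF assms(1)]]])
        (intro nn_integral_mono integrand_le)
    also have "\<dots> = ennreal (C0 * ?H * ?K x a) * ennreal ((?h ^ ?d * ?L)\<^sup>2)"
      by (subst nn_integral_cmult) (simp_all add: nn_integral_abs_rescaled_pair[OF assms(1) h K0_int])
    finally show ?thesis
      using C0_nonneg by (simp add: ennreal_mult[symmetric] mult_ac)
  qed
  have "(\<integral>\<^sup>+a. ennreal \<bar>Pk p (fn K0 \<gamma> x x0 x1 n) a\<bar> \<partial>lborel)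
      \<le> (\<integral>\<^sup>+a. ennreal (C0 * ?H * (?h ^ ?d * ?L)\<^sup>2) * ennreal (?K x a) \<partial>lborel)"
    by (intro nn_integral_mono pointwise)
  also have "\<dots> = ennreal (C0 * ?H * (?h ^ ?d * ?L)\<^sup>2) * (ennreal (?h ^ ?d) * ennreal ?L)"
    by (subst nn_integral_cmult) (simp_all add: nn_integral_abs_rescaled[OF assms(1) h] L)
  also have "\<dots> = ennreal (C0 * ?L ^ 3 * (?H * (?h ^ ?d) ^ 3))"
    using C0_nonneg L0 h by (simp add: ennreal_mult[symmetric] power2_eq_square power3_eq_cube mult_ac)
  also have "?H * (?h ^ ?d) ^ 3 = ?h powr (3 * real ?d / 2)"
  proof -
    have "(?h ^ ?d) ^ 3 = ?h powr (3 * real ?d)"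
      using h by (simp add: powr_realpow[symmetric] powr_powr power_mult[symmetric] mult.commute)
    then show ?thesis using h by (simp add: powr_add[symmetric])
  qed
  finally show ?thesis by (simp add: mult_ac)
qed

end

section \<open>Geometric ergodicity\<close>

locale geometrically_ergodic_kernel = bounded_density_kernel p mu C0
  for p :: "'a::euclidean_space \<Rightarrow> 'a \<Rightarrow> 'a \<Rightarrow> real" and mu C0 +
  fixes V :: "'a \<Rightarrow> real" and M0 \<alpha> :: real
  assumes V_ge: "\<And>y. 1 \<le> V y"
    and alpha: "0 < \<alpha>" "\<alpha> < 1"
    and geom: "\<And>f n y. f \<in> borel_measurable borel \<Longrightarrow> (\<forall>z. \<bar>f z\<bar> \<le> V z) \<Longrightarrow>
                 \<bar>(Qop p ^^ n) f y - pairing mu f\<bar> \<le> M0 * \<alpha> ^ n * V y"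
begin

text \<open>For \<open>|f| \<le> S\<close> apply the hypothesis to \<open>f / S\<close>, which is bounded by \<open>1 \<le> V\<close>.\<close>

lemma Qop_funpow_deviation_le:
  fixes f :: "'a \<Rightarrow> real"
  assumes [measurable]: "f \<in> borel_measurable borel" and S: "\<And>z. \<bar>f z\<bar> \<le> S" and "0 < S"
  shows "\<bar>(Qop p ^^ n) f y - pairing mu f\<bar> \<le> M0 * \<alpha> ^ n * V y * S"
proof -
  have "\<forall>z. \<bar>(1 / S) * f z\<bar> \<le> V z"
  proof
    fix z
    have "\<bar>(1 / S) * f z\<bar> \<le> 1" using S[of z] \<open>0 < S\<close> by (simp add: abs_mult divide_le_eq_1)
    then show "\<bar>(1 / S) * f z\<bar> \<le> V z" using V_ge[of z] by linarith
  qed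
  then have "\<bar>(Qop p ^^ n) (\<lambda>z. (1 / S) * f z) y - pairing mu (\<lambda>z. (1 / S) * f z)\<bar> \<le> M0 * \<alpha> ^ n * V y"
    by (intro geom) measurable
  then have "\<bar>(1 / S) * ((Qop p ^^ n) f y - pairing mu f)\<bar> \<le> M0 * \<alpha> ^ n * V y"
    unfolding Qop_funpow_cmult pairing_cmult by (simp only: right_diff_distrib)
  then have "\<bar>(Qop p ^^ n) f y - pairing mu f\<bar> / S \<le> M0 * \<alpha> ^ n * V y"
    using \<open>0 < S\<close> by (simp add: abs_mult)
  then show ?thesis using \<open>0 < S\<close> by (simp add: divide_le_eq)
qed

lemma Qop_funpow_tendsto_pairing:
  fixes f :: "'a \<Rightarrow> real"
  assumes "f \<in> borel_measurable borel" and "\<And>z. \<bar>f z\<bar> \<le> S" and "0 < S"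
  shows "(\<lambda>n. (Qop p ^^ n) f y) \<longlonglongrightarrow> pairing mu f"
proof -
  have "(\<lambda>n. M0 * V y * S * \<alpha> ^ n) \<longlonglongrightarrow> M0 * V y * S * 0"
    by (intro tendsto_intros LIMSEQ_power_zero) (use alpha in auto)
  then have "(\<lambda>n. M0 * \<alpha> ^ n * V y * S) \<longlonglongrightarrow> 0" by (simp add: mult_ac)
  then have "(\<lambda>n. (Qop p ^^ n) f y - pairing mu f) \<longlonglongrightarrow> 0"
    by (rule Lim_null_comparison[rotated]) (use Qop_funpow_deviation_le[OF assms] in auto)
  then show ?thesis by (simp add: LIM_zero_iff)
qed

text \<open>Invariance of \<open>\<mu>\<close>: compare the limits of \<open>Q^n (Q f)\<close> and \<open>Q^(n+1) f\<close>.\<close>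

lemma pairing_Qop:
  fixes f :: "'a \<Rightarrow> real"
  assumes [measurable]: "f \<in> borel_measurable borel" and S: "\<And>z. \<bar>f z\<bar> \<le> S" and "0 < S"
  shows "pairing mu (Qop p f) = pairing mu f"
proof -
  have "(\<lambda>n. (Qop p ^^ n) (Qop p f) 0) \<longlonglongrightarrow> pairing mu (Qop p f)"
    by (rule Qop_funpow_tendsto_pairing[OF borel_measurable_Qop _ \<open>0 < S\<close>])
      (auto intro: Qop_abs_le S)
  moreover have "(\<lambda>n. (Qop p ^^ Suc n) f 0) \<longlonglongrightarrow> pairing mu f"
    using Qop_funpow_tendsto_pairing[OF assms, of 0] by (rule LIMSEQ_Suc)
  ultimately show ?thesis
    using LIMSEQ_unique by (simp add: funpow_Suc_right del: funpow.simps)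
qed

lemma scaled_Qop_funpow_le:
  fixes \<phi> :: "'a \<Rightarrow> real"
  assumes "Qop p \<phi> \<in> borel_measurable borel" and "\<And>z. \<bar>Qop p \<phi> z\<bar> \<le> s" and "0 < s"
    and "pairing mu (Qop p \<phi>) = 0" and "k < q"
  shows "\<bar>2 ^ (q - k) * (Qop p ^^ (q - k)) \<phi> y\<bar> \<le> 2 * \<bar>M0\<bar> * s * max 1 (2 * \<alpha>) ^ q * V y"
proof -
  define j where "j = q - k - 1"
  have q_k: "q - k = Suc j" and "j \<le> q" using \<open>k < q\<close> unfolding j_def by simp_all
  have V0: "0 \<le> V y" using V_ge[of y] by linarith
  have "\<bar>(Qop p ^^ j) (Qop p \<phi>) y\<bar> \<le> M0 * \<alpha> ^ j * V y * s"
    using Qop_funpow_deviation_le[OF assms(1-3), of j y] assms(4) by simp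
  also have "\<dots> \<le> \<bar>M0\<bar> * \<alpha> ^ j * V y * s"
    using alpha V0 \<open>0 < s\<close> by (intro mult_right_mono) auto
  finally have deviation: "\<bar>(Qop p ^^ j) (Qop p \<phi>) y\<bar> \<le> \<bar>M0\<bar> * \<alpha> ^ j * V y * s" .
  have "(2 * \<alpha>) ^ j \<le> max 1 (2 * \<alpha>) ^ j"
    by (rule power_mono) (use alpha in auto)
  also have "\<dots> \<le> max 1 (2 * \<alpha>) ^ q"
    by (rule power_increasing[OF \<open>j \<le> q\<close>]) simp
  finally have power_le: "(2 * \<alpha>) ^ j \<le> max 1 (2 * \<alpha>) ^ q" .
  have "\<bar>2 ^ (q - k) * (Qop p ^^ (q - k)) \<phi> y\<bar> = 2 ^ Suc j * \<bar>(Qop p ^^ j) (Qop p \<phi>) y\<bar>"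
    unfolding q_k by (simp add: abs_mult funpow_Suc_right del: funpow.simps)
  also have "\<dots> \<le> 2 ^ Suc j * (\<bar>M0\<bar> * \<alpha> ^ j * V y * s)"
    using deviation by simp
  also have "\<dots> = 2 * \<bar>M0\<bar> * s * V y * (2 * \<alpha>) ^ j"
    by (simp add: power_mult_distrib)
  also have "\<dots> \<le> 2 * \<bar>M0\<bar> * s * V y * max 1 (2 * \<alpha>) ^ q"
    using power_le V0 \<open>0 < s\<close> by (intro mult_left_mono) auto
  finally show ?thesis by (simp add: mult_ac)
qed

lemma abs_sum_scaled_Qop_funpow_le:
  fixes \<phi> :: "'a \<Rightarrow> real"
  assumes A: "\<And>z. \<bar>\<phi> z\<bar> \<le> A"
    and "Qop p \<phi> \<in> borel_measurable borel" and "\<And>z. \<bar>Qop p \<phi> z\<bar> \<le> s" and "0 < s"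
    and "pairing mu (Qop p \<phi>) = 0"
  shows "\<bar>\<Sum>k=0..q. 2 ^ (q - k) * (Qop p ^^ (q - k)) \<phi> y\<bar>
          \<le> (A + real q * (2 * \<bar>M0\<bar> * s * max 1 (2 * \<alpha>) ^ q)) * V y"
proof -
  let ?c = "2 * \<bar>M0\<bar> * s * max 1 (2 * \<alpha>) ^ q"
  let ?T = "\<Sum>k=0..<q. 2 ^ (q - k) * (Qop p ^^ (q - k)) \<phi> y"
  have "\<bar>?T\<bar> \<le> (\<Sum>k=0..<q. \<bar>2 ^ (q - k) * (Qop p ^^ (q - k)) \<phi> y\<bar>)"
    by (rule sum_abs)
  also have "\<dots> \<le> (\<Sum>k=0..<q. ?c * V y)"
    by (rule sum_mono) (use scaled_Qop_funpow_le[OF assms(2-5)] in simp)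
  finally have tail: "\<bar>?T\<bar> \<le> real q * ?c * V y" by simp
  have "0 \<le> A" using A[of y] by linarith
  then have "A \<le> A * V y" using V_ge[of y] by (simp add: mult_le_cancel_left1)
  then have head: "\<bar>\<phi> y\<bar> \<le> A * V y" using A[of y] by linarith
  have "(\<Sum>k=0..q. 2 ^ (q - k) * (Qop p ^^ (q - k)) \<phi> y) = \<phi> y + ?T"
    by (subst sum.last_plus) simp_all
  then have "\<bar>\<Sum>k=0..q. 2 ^ (q - k) * (Qop p ^^ (q - k)) \<phi> y\<bar> \<le> \<bar>\<phi> y\<bar> + \<bar>?T\<bar>"
    by (simp add: abs_triangle_ineq)
  also have "\<dots> \<le> A * V y + real q * ?c * V y"
    using head tail by (rule add_mono)
  finally show ?thesis by (simp add: distrib_right)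
qed

lemma abs_sum_scaled_Qop_funpow_Pk_ftil_le:
  fixes K0 :: "'a \<Rightarrow> real"
  assumes [measurable]: "K0 \<in> borel_measurable borel" and KB: "\<And>u. \<bar>K0 u\<bar> \<le> B"
    and K0_int: "integrable lborel K0"
  shows "\<bar>\<Sum>k=0..q. 2 ^ (q - k) * (Qop p ^^ (q - k)) (Pk p (ftil p mu K0 \<gamma> x x0 x1 n)) y\<bar>
     \<le> (2 * B ^ 3 * 2 powr (3 * real DIM('a) * \<gamma> * real n / 2)
        + real q * (2 * \<bar>M0\<bar> * (3 * C0 * C0 * (\<integral>u. \<bar>K0 u\<bar> \<partial>lborel) ^ 3 + 1))
          * 2 powr (- (3 * real DIM('a) * \<gamma> * real n) / 2) * max 1 (2 * \<alpha>) ^ q) * V y"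
proof -
  let ?A = "hn \<gamma> n powr (- (3 * real DIM('a)) / 2) * B ^ 3"
  let ?L = "\<integral>u. \<bar>K0 u\<bar> \<partial>lborel"
  let ?hp = "hn \<gamma> n powr (3 * real DIM('a) / 2)"
  define I where "I = C0 * ?L ^ 3 * ?hp"
  define u where "u = Pk p (fn K0 \<gamma> x x0 x1 n)"
  define c where "c = pairing mu u"
  define \<phi> where "\<phi> = (\<lambda>y. u y - c)"
  have L0: "0 \<le> ?L" by (rule integral_nonneg_AE) simp
  have hp0: "0 < ?hp" using hn_pos[of \<gamma> n] by simp
  have I0: "0 \<le> I" unfolding I_def using C0_nonneg L0 hp0 by simp
  have B0: "0 \<le> B" using KB[of 0] by linarith
  have um[measurable]: "u \<in> borel_measurable borel"
    unfolding u_def by (rule borel_measurable_Pk[OF borel_measurable_fn(1)]) simp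
  have uA: "\<bar>u z\<bar> \<le> ?A" for z
    unfolding u_def by (rule Pk_abs_le[OF borel_measurable_fn(2) fn_abs_le[OF KB]]) simp
  have uI: "(\<integral>\<^sup>+a. ennreal \<bar>u a\<bar> \<partial>lborel) \<le> ennreal I"
    unfolding u_def I_def by (rule nn_integral_abs_Pk_fn_le) (simp_all add: K0_int)
  have Pk_ftil: "Pk p (ftil p mu K0 \<gamma> x x0 x1 n) = \<phi>"
  proof
    fix y
    have "Pk p (ftil p mu K0 \<gamma> x x0 x1 n) y = Pk p (\<lambda>y a b. fn K0 \<gamma> x x0 x1 n y a b - c) y"
      unfolding ftil_def c_def u_def by simp
    also have "\<dots> = u y - c"
      unfolding u_def by (rule Pk_diff_const[OF borel_measurable_fn(2) fn_abs_le[OF KB]]) simp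
    finally show "Pk p (ftil p mu K0 \<gamma> x x0 x1 n) y = \<phi> y" unfolding \<phi>_def .
  qed
  have \<phi>m[measurable]: "\<phi> \<in> borel_measurable borel" unfolding \<phi>_def by measurable
  have \<phi>A: "\<bar>\<phi> z\<bar> \<le> 2 * ?A" for z
    unfolding \<phi>_def c_def using uA[of z] pairing_abs_le[OF um uA] by linarith
  have Q\<phi>: "\<bar>Qop p \<phi> z\<bar> \<le> (3 * C0 * C0 * ?L ^ 3 + 1) * ?hp" for z
  proof -
    have "\<bar>Qop p \<phi> z\<bar> \<le> \<bar>Qop p u z\<bar> + \<bar>c\<bar>"
      unfolding \<phi>_def Qop_diff_const[OF um uA] by linarith
    also have "\<dots> \<le> 2 * C0 * I + C0 * I"
      unfolding c_def using Qop_abs_le_L1[OF um uI I0, of z] pairing_abs_le_L1[OF um uI I0] by linarith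
    also have "\<dots> \<le> (3 * C0 * C0 * ?L ^ 3 + 1) * ?hp"
      unfolding I_def using hp0 by (simp add: algebra_simps)
    finally show ?thesis .
  qed
  have s_pos: "0 < (3 * C0 * C0 * ?L ^ 3 + 1) * ?hp"
    using C0_nonneg L0 hp0 by (intro mult_pos_pos add_nonneg_pos) simp_all
  have pairing_zero: "pairing mu (Qop p \<phi>) = 0"
  proof -
    have "pairing mu (Qop p \<phi>) = pairing mu \<phi>"
    proof (rule pairing_Qop[OF \<phi>m, where S="2 * ?A + 1"])
      have "0 \<le> ?A" using B0 by simp
      then show "\<bar>\<phi> z\<bar> \<le> 2 * ?A + 1" "0 < 2 * ?A + 1" for z using \<phi>A[of z] by linarith+
    qed
    also have "\<dots> = 0"
      unfolding \<phi>_def c_def using pairing_diff_const[OF um uA] by simp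
    finally show ?thesis .
  qed
  have "?A = B ^ 3 * 2 powr (3 * real DIM('a) * \<gamma> * real n / 2)"
    and "?hp = 2 powr (- (3 * real DIM('a) * \<gamma> * real n) / 2)"
    unfolding hn_powr by (simp_all add: field_simps)
  with abs_sum_scaled_Qop_funpow_le[OF \<phi>A borel_measurable_Qop[OF \<phi>m] Q\<phi> s_pos pairing_zero, of q y]
  show ?thesis unfolding Pk_ftil by (simp only: mult_ac)
qed

end

section \<open>The many-to-one formula\<close>

lemma finite_Gen: "finite (Gen k)"
  using finite_lists_length_eq[of "UNIV :: bool set" k] by (simp add: Gen_def)

lemma card_Gen: "card (Gen k) = 2 ^ k"
  using card_lists_length_eq[of "UNIV :: bool set" k] by (simp add: Gen_def)

lemma sum_Gen_Suc: "(\<Sum>i\<in>Gen (Suc k). f i) = (\<Sum>j\<in>Gen k. f (j @ [False]) + f (j @ [True]))"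
proof -
  have Gen_Suc: "Gen (Suc k) = (\<lambda>(j, b). j @ [b]) ` (Gen k \<times> UNIV)"
  proof (intro equalityI subsetI)
    fix i assume "i \<in> Gen (Suc k)"
    then have "length i = Suc k" by (simp add: Gen_def)
    then have "i = butlast i @ [last i]" and "butlast i \<in> Gen k"
      by (auto simp: Gen_def intro!: append_butlast_last_id[symmetric])
    then show "i \<in> (\<lambda>(j, b). j @ [b]) ` (Gen k \<times> UNIV)" by force
  qed (auto simp: Gen_def)
  have "inj_on (\<lambda>(j, b). j @ [b]) (Gen k \<times> (UNIV :: bool set))"
    by (auto simp: inj_on_def)
  then have "(\<Sum>i\<in>Gen (Suc k). f i) = (\<Sum>(j, b)\<in>Gen k \<times> UNIV. f (j @ [b]))"
    unfolding Gen_Suc by (simp add: sum.reindex case_prod_beta')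
  also have "\<dots> = (\<Sum>j\<in>Gen k. f (j @ [False]) + f (j @ [True]))"
    by (simp add: sum.cartesian_product[symmetric] UNIV_bool add.commute)
  finally show ?thesis .
qed

locale bifurcating_markov_chain = bounded_density_kernel p mu C0
  for p :: "'a::euclidean_space \<Rightarrow> 'a \<Rightarrow> 'a \<Rightarrow> real" and mu C0 +
  fixes M :: "'w measure" and X :: "bool list \<Rightarrow> 'w \<Rightarrow> 'a" and \<nu> :: "'a measure"
  assumes bmc: "BMC M X p \<nu>"
begin

lemma prob_space_M: "prob_space M"
  and borel_measurable_X[measurable]: "X i \<in> borel_measurable M"
  and nu_eq: "\<nu> = distr M borel (X [])"
  using bmc unfolding BMC_def by simp_all

lemma prob_space_nu: "prob_space \<nu>"
  unfolding nu_eq by (rule prob_space.prob_space_distr[OF prob_space_M]) simp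

lemma sets_nu[simp]: "sets \<nu> = sets borel"
  unfolding nu_eq by simp

lemma integrable_bounded_X:
  fixes g :: "'a \<Rightarrow> real"
  assumes [measurable]: "g \<in> borel_measurable borel" and "\<And>z. \<bar>g z\<bar> \<le> S"
  shows "integrable M (\<lambda>\<omega>. g (X i \<omega>))"
proof -
  interpret prob_space M by (rule prob_space_M)
  show ?thesis by (intro integrable_const_bound[where B=S]) (auto simp: assms(2))
qed

lemma integrable_nu_bounded:
  fixes g :: "'a \<Rightarrow> real"
  assumes "g \<in> borel_measurable borel" and "\<And>z. \<bar>g z\<bar> \<le> S"
  shows "integrable \<nu> g"
proof -
  interpret prob_space \<nu> by (rule prob_space_nu)
  show ?thesis using assms by (intro integrable_const_bound[where B=S]) (auto cong: measurable_cong_sets)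
qed

lemma sigma_finite_subalgebra_tree_sigma: "sigma_finite_subalgebra M (tree_sigma M X k)"
proof -
  interpret prob_space M by (rule prob_space_M)
  have "(\<lambda>\<omega>. restrict (\<lambda>j. X j \<omega>) (Tr k)) \<in> measurable M (PiM (Tr k) (\<lambda>_. borel))"
    by (rule measurable_restrict) simp
  then have "subalgebra M (tree_sigma M X k)"
    unfolding subalgebra_def tree_sigma_def by (simp add: measurable_iff_sets)
  then have "finite_measure_subalgebra M (tree_sigma M X k)"
    by (intro finite_measure_subalgebra.intro finite_measure_subalgebra_axioms.intro) unfold_locales
  then show ?thesis by (rule finite_measure_subalgebra_is_sigma_finite)
qed

text \<open>The defining property of a BMC with all factors but the one at node \<open>j\<close> equal to \<open>1\<close>.\<close>

lemma AE_cond_exp_children: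
  fixes h :: "'a \<Rightarrow> 'a \<Rightarrow> 'a \<Rightarrow> real"
  assumes j: "j \<in> Gen k" and hm: "(\<lambda>(a, b, c). h a b c) \<in> borel_measurable borel"
    and S: "\<And>a b c. \<bar>h a b c\<bar> \<le> S"
  shows "AE \<omega> in M. real_cond_exp M (tree_sigma M X k) (\<lambda>\<omega>. h (X j \<omega>) (X (j @ [False]) \<omega>) (X (j @ [True]) \<omega>)) \<omega>
            = Pk p h (X j \<omega>)"
proof -
  define g where "g = (\<lambda>i a b c. if i = j then h a b c else (1::real))"
  have "(\<lambda>(a, b, c). g i a b c) \<in> borel_measurable borel" for i
    by (cases "i = j") (simp_all add: g_def hm)
  moreover have "bounded (range (\<lambda>(a, b, c). g i a b c))" for i
    using S unfolding bounded_iff g_def by (auto intro!: exI[where x="max S 1"] simp: le_max_iff_disj)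
  ultimately have "AE \<omega> in M. real_cond_exp M (tree_sigma M X k)
              (\<lambda>\<omega>. \<Prod>i\<in>Gen k. g i (X i \<omega>) (X (i @ [False]) \<omega>) (X (i @ [True]) \<omega>)) \<omega>
            = (\<Prod>i\<in>Gen k. Pk p (g i) (X i \<omega>))"
    using bmc unfolding BMC_def by blast
  moreover have "(\<lambda>\<omega>. \<Prod>i\<in>Gen k. g i (X i \<omega>) (X (i @ [False]) \<omega>) (X (i @ [True]) \<omega>))
      = (\<lambda>\<omega>. h (X j \<omega>) (X (j @ [False]) \<omega>) (X (j @ [True]) \<omega>))"
    unfolding g_def using j by (simp add: finite_Gen)
  moreover have "(\<Prod>i\<in>Gen k. Pk p (g i) (X i \<omega>)) = Pk p h (X j \<omega>)" for \<omega>
  proof -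
    have "Pk p (g i) (X i \<omega>) = (if i = j then Pk p h (X j \<omega>) else 1)" for i
      by (simp add: g_def)
    then show ?thesis using j by (simp add: finite_Gen)
  qed
  ultimately show ?thesis by simp
qed

lemma integral_children_eq_Pk:
  fixes h :: "'a \<Rightarrow> 'a \<Rightarrow> 'a \<Rightarrow> real"
  assumes j: "j \<in> Gen k" and hm: "(\<lambda>(a, b, c). h a b c) \<in> borel_measurable borel"
    and S: "\<And>a b c. \<bar>h a b c\<bar> \<le> S"
  shows "(\<integral>\<omega>. h (X j \<omega>) (X (j @ [False]) \<omega>) (X (j @ [True]) \<omega>) \<partial>M) = (\<integral>\<omega>. Pk p h (X j \<omega>) \<partial>M)"
proof -
  interpret prob_space M by (rule prob_space_M)
  interpret sigma_finite_subalgebra M "tree_sigma M X k"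
    by (rule sigma_finite_subalgebra_tree_sigma)
  have "(\<lambda>\<omega>. h (X j \<omega>) (X (j @ [False]) \<omega>) (X (j @ [True]) \<omega>)) \<in> borel_measurable M"
    by (rule measurable_compose_3[OF hm]) simp_all
  then have "integrable M (\<lambda>\<omega>. h (X j \<omega>) (X (j @ [False]) \<omega>) (X (j @ [True]) \<omega>))"
    by (intro integrable_const_bound[where B=S]) (auto simp: S)
  then have "(\<integral>\<omega>. h (X j \<omega>) (X (j @ [False]) \<omega>) (X (j @ [True]) \<omega>) \<partial>M)
       = (\<integral>\<omega>. real_cond_exp M (tree_sigma M X k) (\<lambda>\<omega>. h (X j \<omega>) (X (j @ [False]) \<omega>) (X (j @ [True]) \<omega>)) \<omega> \<partial>M)"
    by (simp add: real_cond_exp_int(2))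
  also have "\<dots> = (\<integral>\<omega>. Pk p h (X j \<omega>) \<partial>M)"
    using AE_cond_exp_children[OF assms] borel_measurable_Pk[OF hm]
    by (intro integral_cong_AE) auto
  finally show ?thesis .
qed

lemma integral_children_eq_Qop:
  fixes f :: "'a \<Rightarrow> real"
  assumes [measurable]: "f \<in> borel_measurable borel" and S: "\<And>z. \<bar>f z\<bar> \<le> S" and j: "j \<in> Gen k"
  shows "(\<integral>\<omega>. f (X (j @ [False]) \<omega>) + f (X (j @ [True]) \<omega>) \<partial>M) = (\<integral>\<omega>. 2 * Qop p f (X j \<omega>) \<partial>M)"
proof -
  have [measurable]: "Pk p (\<lambda>_ a _. f a) \<in> borel_measurable borel" "Pk p (\<lambda>_ _ b. f b) \<in> borel_measurable borel"
    by (rule borel_measurable_Pk, simp add: case_prod_beta', measurable)+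
  have PS: "\<bar>Pk p (\<lambda>_ a _. f a) z\<bar> \<le> S" "\<bar>Pk p (\<lambda>_ _ b. f b) z\<bar> \<le> S" for z
    by (rule Pk_abs_le, measurable, simp add: S)+
  have "(\<integral>\<omega>. f (X (j @ [False]) \<omega>) \<partial>M) = (\<integral>\<omega>. Pk p (\<lambda>_ a _. f a) (X j \<omega>) \<partial>M)"
    and "(\<integral>\<omega>. f (X (j @ [True]) \<omega>) \<partial>M) = (\<integral>\<omega>. Pk p (\<lambda>_ _ b. f b) (X j \<omega>) \<partial>M)"
    using integral_children_eq_Pk[OF j, of "\<lambda>_ a _. f a" S] integral_children_eq_Pk[OF j, of "\<lambda>_ _ b. f b" S] S
    by (simp_all add: case_prod_beta', measurable)
  moreover have "(\<integral>\<omega>. f (X (j @ [False]) \<omega>) + f (X (j @ [True]) \<omega>) \<partial>M)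
      = (\<integral>\<omega>. f (X (j @ [False]) \<omega>) \<partial>M) + (\<integral>\<omega>. f (X (j @ [True]) \<omega>) \<partial>M)"
    by (intro Bochner_Integration.integral_add integrable_bounded_X[OF _ S]) simp_all
  moreover have "(\<integral>\<omega>. Pk p (\<lambda>_ a _. f a) (X j \<omega>) + Pk p (\<lambda>_ _ b. f b) (X j \<omega>) \<partial>M)
      = (\<integral>\<omega>. Pk p (\<lambda>_ a _. f a) (X j \<omega>) \<partial>M) + (\<integral>\<omega>. Pk p (\<lambda>_ _ b. f b) (X j \<omega>) \<partial>M)"
    by (intro Bochner_Integration.integral_add integrable_bounded_X[OF _ PS(1)] integrable_bounded_X[OF _ PS(2)])
      simp_all
  moreover have "(\<integral>\<omega>. 2 * Qop p f (X j \<omega>) \<partial>M)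
      = (\<integral>\<omega>. Pk p (\<lambda>_ a _. f a) (X j \<omega>) + Pk p (\<lambda>_ _ b. f b) (X j \<omega>) \<partial>M)"
    by (rule Bochner_Integration.integral_cong) (simp_all add: Qop_def)
  ultimately show ?thesis by linarith
qed

lemma integral_sum_Gen:
  fixes f :: "'a \<Rightarrow> real"
  assumes "f \<in> borel_measurable borel" and "\<And>z. \<bar>f z\<bar> \<le> S"
  shows "(\<integral>\<omega>. (\<Sum>i\<in>Gen m. f (X i \<omega>)) \<partial>M) = 2 ^ m * (\<integral>z. (Qop p ^^ m) f z \<partial>\<nu>)"
  using assms
proof (induction m arbitrary: f)
  case 0
  have "Gen 0 = {[]}" unfolding Gen_def by auto
  then show ?case unfolding nu_eq by (simp add: integral_distr[OF borel_measurable_X 0(1)])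
next
  case (Suc m)
  note fm[measurable] = Suc.prems(1) and fS = Suc.prems(2)
  have Qm: "Qop p f \<in> borel_measurable borel" by (rule borel_measurable_Qop) simp
  have QS: "\<And>z. \<bar>Qop p f z\<bar> \<le> S" by (rule Qop_abs_le) (auto simp: fS)
  have "(\<integral>\<omega>. (\<Sum>i\<in>Gen (Suc m). f (X i \<omega>)) \<partial>M)
      = (\<Sum>j\<in>Gen m. (\<integral>\<omega>. f (X (j @ [False]) \<omega>) + f (X (j @ [True]) \<omega>) \<partial>M))"
    unfolding sum_Gen_Suc
    by (rule Bochner_Integration.integral_sum) (intro Bochner_Integration.integrable_add integrable_bounded_X[OF fm fS])
  also have "\<dots> = (\<Sum>j\<in>Gen m. (\<integral>\<omega>. 2 * Qop p f (X j \<omega>) \<partial>M))"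
    using integral_children_eq_Qop[OF fm fS] by simp
  also have "\<dots> = 2 * (\<integral>\<omega>. (\<Sum>j\<in>Gen m. Qop p f (X j \<omega>)) \<partial>M)"
    by (subst Bochner_Integration.integral_sum)
      (auto simp: sum_distrib_left intro: integrable_bounded_X[OF Qm QS])
  also have "\<dots> = 2 ^ Suc m * (\<integral>z. (Qop p ^^ m) (Qop p f) z \<partial>\<nu>)"
    using Suc.IH[OF Qm QS] by simp
  finally show ?case by (simp add: funpow_Suc_right del: funpow.simps)
qed

text \<open>For unbounded \<open>W \<ge> 0\<close> apply the formula to the truncations \<open>min W N\<close>, use monotonicity
  of \<open>Q\<close> and pass to the limit by monotone convergence.\<close>

lemma nn_integral_sum_Gen_le:
  fixes W g :: "'a \<Rightarrow> real"
  assumes Wm[measurable]: "W \<in> borel_measurable borel" and W0: "\<And>z. 0 \<le> W z"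
    and Wint0: "\<And>j y. integrable (Pmeas p y) (\<lambda>z. (Qop p ^^ j) W (fst z))"
    and Wint1: "\<And>j y. integrable (Pmeas p y) (\<lambda>z. (Qop p ^^ j) W (snd z))"
    and gdom: "\<And>y. (Qop p ^^ m) W y \<le> g y" and gint: "integrable \<nu> g"
  shows "(\<integral>\<^sup>+\<omega>. (\<Sum>i\<in>Gen m. ennreal (W (X i \<omega>))) \<partial>M) \<le> ennreal (2 ^ m * (\<integral>z. g z \<partial>\<nu>))"
proof -
  define F where "F = (\<lambda>(N::nat) z. min (W z) (real N))"
  have Fm[measurable]: "F N \<in> borel_measurable borel" for N unfolding F_def by measurable
  have FS: "\<bar>F N z\<bar> \<le> real N" and F0: "0 \<le> F N z" for N z
    unfolding F_def using W0[of z] by auto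
  have mono: "(Qop p ^^ j) (F N) y \<le> (Qop p ^^ j) W y" for j N y
  proof (induction j arbitrary: y)
    case 0 then show ?case by (simp add: F_def)
  next
    case (Suc j)
    show ?case
      using Qop_mono[OF borel_measurable_Qop_funpow[OF Fm] Qop_funpow_abs_le[OF Fm FS] Suc.IH Wint0 Wint1]
      by simp
  qed
  have truncated: "(\<integral>\<^sup>+\<omega>. (\<Sum>i\<in>Gen m. ennreal (F N (X i \<omega>))) \<partial>M) \<le> ennreal (2 ^ m * (\<integral>z. g z \<partial>\<nu>))" for N
  proof -
    have "(\<integral>\<^sup>+\<omega>. (\<Sum>i\<in>Gen m. ennreal (F N (X i \<omega>))) \<partial>M) = ennreal (\<integral>\<omega>. (\<Sum>i\<in>Gen m. F N (X i \<omega>)) \<partial>M)"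
      using F0 by (subst nn_integral_eq_integral[symmetric])
        (auto intro!: Bochner_Integration.integrable_sum integrable_bounded_X[OF Fm FS] sum_nonneg
              intro: nn_integral_cong simp: sum_ennreal)
    also have "(\<integral>\<omega>. (\<Sum>i\<in>Gen m. F N (X i \<omega>)) \<partial>M) = 2 ^ m * (\<integral>z. (Qop p ^^ m) (F N) z \<partial>\<nu>)"
      by (rule integral_sum_Gen[OF Fm FS])
    also have "\<dots> \<le> 2 ^ m * (\<integral>z. g z \<partial>\<nu>)"
      by (intro mult_left_mono integral_mono[OF integrable_nu_bounded[OF _ Qop_funpow_abs_le[OF Fm FS]] gint])
        (auto intro: borel_measurable_Qop_funpow order.trans[OF mono gdom])
    finally show ?thesis by (simp add: ennreal_leI)
  qed
  have "(\<Sum>i\<in>Gen m. ennreal (W (X i \<omega>))) = (SUP N. (\<Sum>i\<in>Gen m. ennreal (F N (X i \<omega>))))" for \<omega>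
  proof (rule antisym)
    obtain N :: nat where N: "(\<Sum>i\<in>Gen m. W (X i \<omega>)) \<le> real N" using real_arch_simple by blast
    have "F N (X i \<omega>) = W (X i \<omega>)" if "i \<in> Gen m" for i
      using member_le_sum[OF that, of "\<lambda>i. W (X i \<omega>)"] W0 N finite_Gen unfolding F_def by simp
    then have "(\<Sum>i\<in>Gen m. ennreal (W (X i \<omega>))) = (\<Sum>i\<in>Gen m. ennreal (F N (X i \<omega>)))"
      by simp
    also have "\<dots> \<le> (SUP N. (\<Sum>i\<in>Gen m. ennreal (F N (X i \<omega>))))"
      by (rule SUP_upper) simp
    finally show "(\<Sum>i\<in>Gen m. ennreal (W (X i \<omega>))) \<le> (SUP N. (\<Sum>i\<in>Gen m. ennreal (F N (X i \<omega>))))" .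
    show "(SUP N. (\<Sum>i\<in>Gen m. ennreal (F N (X i \<omega>)))) \<le> (\<Sum>i\<in>Gen m. ennreal (W (X i \<omega>)))"
      by (rule SUP_least, rule sum_mono) (simp add: F_def ennreal_leI)
  qed
  then have "(\<integral>\<^sup>+\<omega>. (\<Sum>i\<in>Gen m. ennreal (W (X i \<omega>))) \<partial>M)
      = (SUP N. (\<integral>\<^sup>+\<omega>. (\<Sum>i\<in>Gen m. ennreal (F N (X i \<omega>))) \<partial>M))"
    by (simp add: incseq_def le_fun_def F_def sum_mono ennreal_leI nn_integral_monotone_convergence_SUP)
  also have "\<dots> \<le> ennreal (2 ^ m * (\<integral>z. g z \<partial>\<nu>))"
    by (rule SUP_least) (rule truncated)
  finally show ?thesis .
qed

end

context bifurcating_markov_chain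
begin

lemma nn_integral_R2_le:
  fixes K0 :: "'a \<Rightarrow> real" and V :: "'a \<Rightarrow> real"
  assumes "pp n \<le> n" and [measurable]: "V \<in> borel_measurable borel"
    and sum_le: "\<And>y. \<bar>\<Sum>k=0..pp n. 2 ^ (pp n - k) * (Qop p ^^ (pp n - k)) (Pk p (ftil p mu K0 \<gamma> x x0 x1 n)) y\<bar> \<le> c * V y"
    and EV: "(\<integral>\<^sup>+\<omega>. (\<Sum>i\<in>Gen (n - pp n). ennreal ((V (X i \<omega>))\<^sup>2)) \<partial>M) \<le> ennreal (2 ^ (n - pp n) * G)"
  shows "(\<integral>\<^sup>+\<omega>. ennreal (R2 X p mu K0 \<gamma> x x0 x1 pp n \<omega>) \<partial>M) \<le> ennreal (c\<^sup>2 / 2 ^ pp n * G)"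
proof -
  have R2_le: "R2 X p mu K0 \<gamma> x x0 x1 pp n \<omega> \<le> c\<^sup>2 / 2 ^ n * (\<Sum>i\<in>Gen (n - pp n). (V (X i \<omega>))\<^sup>2)" for \<omega>
  proof -
    have "(\<Sum>k=0..pp n. 2 ^ (pp n - k) * (Qop p ^^ (pp n - k)) (Pk p (ftil p mu K0 \<gamma> x x0 x1 n)) y)\<^sup>2 \<le> c\<^sup>2 * (V y)\<^sup>2" for y
      using power_mono[OF sum_le[of y], of 2] by (simp add: power_mult_distrib)
    then have "R2 X p mu K0 \<gamma> x x0 x1 pp n \<omega> \<le> 1 / 2 ^ n * (\<Sum>i\<in>Gen (n - pp n). c\<^sup>2 * (V (X i \<omega>))\<^sup>2)"
      unfolding R2_def card_Gen of_nat_power of_nat_numeral by (intro mult_left_mono sum_mono) simp_all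
    then show ?thesis by (simp add: sum_distrib_left)
  qed
  have "(\<integral>\<^sup>+\<omega>. ennreal (R2 X p mu K0 \<gamma> x x0 x1 pp n \<omega>) \<partial>M)
      \<le> (\<integral>\<^sup>+\<omega>. ennreal (c\<^sup>2 / 2 ^ n) * (\<Sum>i\<in>Gen (n - pp n). ennreal ((V (X i \<omega>))\<^sup>2)) \<partial>M)"
  proof (rule nn_integral_mono)
    fix \<omega>
    have "ennreal (R2 X p mu K0 \<gamma> x x0 x1 pp n \<omega>) \<le> ennreal (c\<^sup>2 / 2 ^ n * (\<Sum>i\<in>Gen (n - pp n). (V (X i \<omega>))\<^sup>2))"
      by (rule ennreal_leI[OF R2_le])
    also have "\<dots> = ennreal (c\<^sup>2 / 2 ^ n) * (\<Sum>i\<in>Gen (n - pp n). ennreal ((V (X i \<omega>))\<^sup>2))"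
      by (simp add: ennreal_mult'[symmetric] sum_ennreal del: ennreal_mult')
    finally show "ennreal (R2 X p mu K0 \<gamma> x x0 x1 pp n \<omega>)
        \<le> ennreal (c\<^sup>2 / 2 ^ n) * (\<Sum>i\<in>Gen (n - pp n). ennreal ((V (X i \<omega>))\<^sup>2))" .
  qed
  also have "\<dots> = ennreal (c\<^sup>2 / 2 ^ n) * (\<integral>\<^sup>+\<omega>. (\<Sum>i\<in>Gen (n - pp n). ennreal ((V (X i \<omega>))\<^sup>2)) \<partial>M)"
    by (rule nn_integral_cmult) measurable
  also have "\<dots> \<le> ennreal (c\<^sup>2 / 2 ^ n) * ennreal (2 ^ (n - pp n) * G)"
    by (rule mult_left_mono[OF EV]) simp
  also have "\<dots> = ennreal (c\<^sup>2 / 2 ^ n * (2 ^ (n - pp n) * G))"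
    by (simp add: ennreal_mult'[symmetric])
  also have "c\<^sup>2 / 2 ^ n * (2 ^ (n - pp n) * G) = c\<^sup>2 / 2 ^ pp n * G"
    using \<open>pp n \<le> n\<close> by (simp add: power_diff)
  finally show ?thesis .
qed

lemma tendsto_nn_integral_R2:
  fixes K0 :: "'a \<Rightarrow> real" and V :: "'a \<Rightarrow> real"
  assumes "eventually (\<lambda>n. pp n \<le> n) sequentially" and "V \<in> borel_measurable borel"
    and "\<And>n y. \<bar>\<Sum>k=0..pp n. 2 ^ (pp n - k) * (Qop p ^^ (pp n - k)) (Pk p (ftil p mu K0 \<gamma> x x0 x1 n)) y\<bar>
                \<le> c n * V y"
    and "\<And>m. (\<integral>\<^sup>+\<omega>. (\<Sum>i\<in>Gen m. ennreal ((V (X i \<omega>))\<^sup>2)) \<partial>M) \<le> ennreal (2 ^ m * G)"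
    and "(\<lambda>n. (c n)\<^sup>2 / 2 ^ pp n) \<longlonglongrightarrow> 0"
  shows "(\<lambda>n. \<integral>\<^sup>+\<omega>. ennreal (R2 X p mu K0 \<gamma> x x0 x1 pp n \<omega>) \<partial>M) \<longlonglongrightarrow> 0"
proof -
  have "eventually (\<lambda>n. (\<integral>\<^sup>+\<omega>. ennreal (R2 X p mu K0 \<gamma> x x0 x1 pp n \<omega>) \<partial>M)
      \<le> ennreal ((c n)\<^sup>2 / 2 ^ pp n * G)) sequentially"
    using assms(1) by eventually_elim (rule nn_integral_R2_le[OF _ assms(2-4)])
  moreover have "(\<lambda>n. ennreal ((c n)\<^sup>2 / 2 ^ pp n * G)) \<longlonglongrightarrow> 0"
    using tendsto_ennrealI[OF tendsto_mult_left_zero[OF assms(5)]] by (simp only: ennreal_0)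
  ultimately show ?thesis
    by (rule tendsto_sandwich[OF _ _ tendsto_const, rotated]) simp
qed

end

section \<open>Asymptotics of the bound\<close>

lemma tendsto_powr_2_sublinear:
  fixes \<kappa> :: real and q :: "nat \<Rightarrow> nat"
  assumes "\<kappa> < 1" and ratio: "(\<lambda>n. real (q n) / real n) \<longlonglongrightarrow> 1"
  shows "(\<lambda>n. (2::real) powr (\<kappa> * real n - real (q n))) \<longlonglongrightarrow> 0"
proof -
  define \<delta> where "\<delta> = (1 - \<kappa>) / 2"
  have "0 < \<delta>" unfolding \<delta>_def using \<open>\<kappa> < 1\<close> by simp
  have "(\<lambda>n. ((2::real) powr (- \<delta>)) ^ n) \<longlonglongrightarrow> 0"
    using \<open>0 < \<delta>\<close> by (intro LIMSEQ_power_zero) (simp add: powr_less_one)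
  moreover have "eventually (\<lambda>n. 1 - \<delta> < real (q n) / real n) sequentially"
    using \<open>0 < \<delta>\<close> by (intro order_tendstoD(1)[OF ratio]) simp
  then have "eventually (\<lambda>n. norm ((2::real) powr (\<kappa> * real n - real (q n))) \<le> (2 powr (- \<delta>)) ^ n) sequentially"
    using eventually_ge_at_top[of 1]
  proof eventually_elim
    case (elim n)
    then have "\<kappa> * real n + \<delta> * real n < real (q n)"
      unfolding \<delta>_def by (simp add: field_simps)
    then show ?case by (simp add: powr_realpow[symmetric] powr_powr)
  qed
  ultimately show ?thesis by (rule Lim_null_comparison[rotated])
qed

lemma tendsto_real_sq_mult_power:
  fixes r :: real
  assumes "0 \<le> r" "r < 1"
  shows "(\<lambda>n. real n ^ 2 * r ^ n) \<longlonglongrightarrow> 0"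
proof -
  have "(\<lambda>n. real n * sqrt r ^ n) \<longlonglongrightarrow> 0"
    using powser_times_n_limit_0[of "sqrt r"] assms by simp
  then have "(\<lambda>n. (real n * sqrt r ^ n) ^ 2) \<longlonglongrightarrow> 0"
    using tendsto_power[of _ 0 sequentially 2] by simp
  moreover have "(real n * sqrt r ^ n) ^ 2 = real n ^ 2 * r ^ n" for n
    using assms by (simp add: power_mult_distrib power_mult[symmetric] mult.commute[of n 2] power_mult)
  ultimately show ?thesis by simp
qed

lemma sq_mult_powr_div_2pow_le:
  fixes \<alpha> \<kappa> D :: real and q n :: nat
  assumes "0 < \<alpha>" and "q \<le> n"
  shows "(real q * D * 2 powr (- (\<kappa> * real n) / 2) * max 1 (2 * \<alpha>) ^ q)\<^sup>2 / 2 ^ q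
         \<le> D\<^sup>2 * (real n ^ 2 * (max 1 (2 * \<alpha>\<^sup>2) * 2 powr (- \<kappa>)) ^ n)"
proof -
  let ?\<beta> = "max 1 (2 * \<alpha>)" and ?\<rho> = "max 1 (2 * \<alpha>\<^sup>2)"
  have "(2 powr (- (\<kappa> * real n) / 2))\<^sup>2 = (2 powr (- \<kappa>)) ^ n"
    by (simp add: powr_realpow[symmetric] powr_powr powr_add[symmetric] power2_eq_square)
  moreover have "(?\<beta> ^ q)\<^sup>2 / 2 ^ q = (?\<beta>\<^sup>2 / 2) ^ q"
    by (simp add: power_divide power_mult[symmetric] mult.commute)
  moreover have "(?\<beta>\<^sup>2 / 2) ^ q \<le> ?\<rho> ^ n"
  proof -
    have "?\<beta>\<^sup>2 / 2 \<le> ?\<rho>"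
      by (cases "2 * \<alpha> \<le> 1") (simp_all add: power2_eq_square)
    then have "(?\<beta>\<^sup>2 / 2) ^ q \<le> ?\<rho> ^ q" by (rule power_mono) simp
    also have "\<dots> \<le> ?\<rho> ^ n" by (rule power_increasing[OF \<open>q \<le> n\<close>]) simp
    finally show ?thesis .
  qed
  moreover have "real q ^ 2 \<le> real n ^ 2" using \<open>q \<le> n\<close> by (simp add: power_mono)
  ultimately have "D\<^sup>2 * (real q ^ 2 * ((2 powr (- (\<kappa> * real n) / 2))\<^sup>2 * ((?\<beta> ^ q)\<^sup>2 / 2 ^ q)))
      \<le> D\<^sup>2 * (real n ^ 2 * ((2 powr (- \<kappa>)) ^ n * ?\<rho> ^ n))"
    by (intro mult_left_mono mult_mono) auto
  then show ?thesis by (simp add: power_mult_distrib mult_ac)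
qed

text \<open>With \<open>h_n^(3d) = 2^(-\<kappa> n)\<close> this is the bound \<open>c_n\<close> on the inner sum of \<open>R_2(n)\<close>.\<close>

lemma tendsto_bound_sq_div_2pow:
  fixes A D \<alpha> \<kappa> :: real and q :: "nat \<Rightarrow> nat"
  assumes "0 < \<kappa>" "\<kappa> < 1" "0 < \<alpha>" "2 * \<alpha>\<^sup>2 < 2 powr \<kappa>"
    and "eventually (\<lambda>n. q n \<le> n) sequentially"
    and "(\<lambda>n. real (q n) / real n) \<longlonglongrightarrow> 1"
  shows "(\<lambda>n. (A * 2 powr (\<kappa> * real n / 2) + real (q n) * D * 2 powr (- (\<kappa> * real n) / 2)
                  * max 1 (2 * \<alpha>) ^ q n)\<^sup>2 / 2 ^ q n) \<longlonglongrightarrow> 0"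
proof (rule tendsto_sandwich[OF _ _ tendsto_const])
  define r where "r = max 1 (2 * \<alpha>\<^sup>2) * 2 powr (- \<kappa>)"
  have "r < 1"
    using assms(1,4) by (simp add: r_def powr_minus divide_less_eq field_simps)
  then have "(\<lambda>n. 2 * (A\<^sup>2 * 2 powr (\<kappa> * real n - real (q n))) + 2 * (D\<^sup>2 * (real n ^ 2 * r ^ n)))
      \<longlonglongrightarrow> 2 * (A\<^sup>2 * 0) + 2 * (D\<^sup>2 * 0)"
    by (intro tendsto_intros tendsto_powr_2_sublinear tendsto_real_sq_mult_power assms) (simp_all add: r_def)
  then show "(\<lambda>n. 2 * (A\<^sup>2 * 2 powr (\<kappa> * real n - real (q n))) + 2 * (D\<^sup>2 * (real n ^ 2 * r ^ n))) \<longlonglongrightarrow> 0"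
    by simp
  show "eventually (\<lambda>n. (A * 2 powr (\<kappa> * real n / 2) + real (q n) * D * 2 powr (- (\<kappa> * real n) / 2)
                  * max 1 (2 * \<alpha>) ^ q n)\<^sup>2 / 2 ^ q n
        \<le> 2 * (A\<^sup>2 * 2 powr (\<kappa> * real n - real (q n))) + 2 * (D\<^sup>2 * (real n ^ 2 * r ^ n))) sequentially"
    using assms(5)
  proof eventually_elim
    case (elim n)
    let ?a = "A * 2 powr (\<kappa> * real n / 2)"
    let ?b = "real (q n) * D * 2 powr (- (\<kappa> * real n) / 2) * max 1 (2 * \<alpha>) ^ q n"
    have "(?a + ?b)\<^sup>2 \<le> 2 * ?a\<^sup>2 + 2 * ?b\<^sup>2"
      using power2_sum[of ?a ?b] power2_diff[of ?a ?b] zero_le_power2[of "?a - ?b"] by linarith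
    then have "(?a + ?b)\<^sup>2 / 2 ^ q n \<le> (2 * ?a\<^sup>2 + 2 * ?b\<^sup>2) / 2 ^ q n"
      by (rule divide_right_mono) simp
    also have "\<dots> = 2 * (?a\<^sup>2 / 2 ^ q n) + 2 * (?b\<^sup>2 / 2 ^ q n)"
      by (simp add: add_divide_distrib)
    finally have "(?a + ?b)\<^sup>2 / 2 ^ q n \<le> 2 * (?a\<^sup>2 / 2 ^ q n) + 2 * (?b\<^sup>2 / 2 ^ q n)" .
    moreover have "?a\<^sup>2 / 2 ^ q n = A\<^sup>2 * 2 powr (\<kappa> * real n - real (q n))"
      by (simp add: power_mult_distrib powr_realpow[symmetric] powr_powr powr_diff power2_eq_square
          powr_add[symmetric])
    moreover have "?b\<^sup>2 / 2 ^ q n \<le> D\<^sup>2 * (real n ^ 2 * r ^ n)"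
      unfolding r_def by (rule sq_mult_powr_div_2pow_le[OF \<open>0 < \<alpha>\<close> elim])
    ultimately show ?case by linarith
  qed
qed simp

locale kernel_stable_class =
  fixes p :: "'a::euclidean_space \<Rightarrow> 'a \<Rightarrow> 'a \<Rightarrow> real" and F :: "('a \<Rightarrow> real) set"
  assumes F_meas: "F \<subseteq> borel_measurable borel"
    and F_add: "\<And>f g. f \<in> F \<Longrightarrow> g \<in> F \<Longrightarrow> (\<lambda>y. f y + g y) \<in> F"
    and F_scale: "\<And>c f. f \<in> F \<Longrightarrow> (\<lambda>y. c * f y) \<in> F"
    and F_const: "\<And>c. (\<lambda>_. c) \<in> F"
    and F_P_int: "\<And>f0 f1 y. f0 \<in> F \<Longrightarrow> f1 \<in> F \<Longrightarrow> integrable (Pmeas p y) (\<lambda>z. f0 (fst z) * f1 (snd z))"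
    and F_P: "\<And>f0 f1. f0 \<in> F \<Longrightarrow> f1 \<in> F \<Longrightarrow> Pk p (\<lambda>_ a b. f0 a * f1 b) \<in> F"
begin

lemma Qop_funpow_mem:
  assumes "f \<in> F"
  shows "(Qop p ^^ n) f \<in> F"
proof -
  have "Qop p f \<in> F" if "f \<in> F" for f
  proof -
    have "(\<lambda>y. (1/2) * (Pk p (\<lambda>_ a b. f a * 1) y + Pk p (\<lambda>_ a b. 1 * f b) y)) \<in> F"
      using that by (intro F_scale F_add F_P F_const)
    then show ?thesis unfolding Qop_def by simp
  qed
  then show ?thesis using assms by (induction n) simp_all
qed

lemma integrable_Pmeas_fst: "f \<in> F \<Longrightarrow> integrable (Pmeas p y) (\<lambda>z. f (fst z))"
  and integrable_Pmeas_snd: "f \<in> F \<Longrightarrow> integrable (Pmeas p y) (\<lambda>z. f (snd z))"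
  using F_P_int[of f "\<lambda>_. 1" y] F_P_int[of "\<lambda>_. 1" f y] F_const by simp_all

end

lemma (in bifurcating_markov_chain) nn_integral_sum_Gen_le_stable_class:
  assumes "kernel_stable_class p F" and "W \<in> F" and "\<And>z. 0 \<le> W z"
    and "\<And>y. (Qop p ^^ m) W y \<le> g y" and "integrable \<nu> g"
  shows "(\<integral>\<^sup>+\<omega>. (\<Sum>i\<in>Gen m. ennreal (W (X i \<omega>))) \<partial>M) \<le> ennreal (2 ^ m * (\<integral>z. g z \<partial>\<nu>))"
proof -
  interpret kernel_stable_class p F by (rule assms(1))
  show ?thesis
    using assms(2-5) F_meas
    by (intro nn_integral_sum_Gen_le integrable_Pmeas_fst integrable_Pmeas_snd Qop_funpow_mem) auto
qed

theorem lemma6p3: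
  fixes M :: "'w measure"
    and X :: "bool list \<Rightarrow> 'w \<Rightarrow> 'a::euclidean_space"
    and p :: "'a \<Rightarrow> 'a \<Rightarrow> 'a \<Rightarrow> real"
    and \<nu> :: "'a measure"
    and F :: "('a \<Rightarrow> real) set"
    and mu :: "'a \<Rightarrow> real"
    and V :: "'a \<Rightarrow> real"
    and \<alpha> M0 C0 \<gamma> :: real
    and K0 :: "'a \<Rightarrow> real"
    and x x0 x1 :: 'a
    and pp :: "nat \<Rightarrow> nat"
  assumes
    \<comment> \<open>(H3) kernel with Lebesgue density p\<close>
    p_nonneg: "\<And>y y0 y1. 0 \<le> p y y0 y1"
    and p_meas: "(\<lambda>(y, y0, y1). p y y0 y1) \<in> borel_measurable borel"
    and p_prob: "\<And>y. prob_space (Pmeas p y)"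
    \<comment> \<open>X is a BMC with kernel P and initial law nu\<close>
    and bmc: "BMC M X p \<nu>"
    \<comment> \<open>(H1)\<close>
    and F_meas: "F \<subseteq> borel_measurable borel"
    and F_add: "\<And>f g. f \<in> F \<Longrightarrow> g \<in> F \<Longrightarrow> (\<lambda>y. f y + g y) \<in> F"
    and F_scale: "\<And>c f. f \<in> F \<Longrightarrow> (\<lambda>y. c * f y) \<in> F"
    and F_const: "\<And>c. (\<lambda>_. c) \<in> F"
    and F_sq: "\<And>f. f \<in> F \<Longrightarrow> (\<lambda>y. (f y)\<^sup>2) \<in> F"
    and F_nu: "\<And>f. f \<in> F \<Longrightarrow> integrable \<nu> f"
    and F_P_int: "\<And>f0 f1 y. f0 \<in> F \<Longrightarrow> f1 \<in> F \<Longrightarrow>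
                     integrable (Pmeas p y) (\<lambda>z. f0 (fst z) * f1 (snd z))"
    and F_P: "\<And>f0 f1. f0 \<in> F \<Longrightarrow> f1 \<in> F \<Longrightarrow> Pk p (\<lambda>_ a b. f0 a * f1 b) \<in> F"
    \<comment> \<open>(H2) and (H3) for mu\<close>
    and mu_nonneg: "\<And>y. 0 \<le> mu y"
    and mu_meas: "mu \<in> borel_measurable borel"
    and mu_prob: "prob_space (mumeas mu)"
    and F_mu: "\<And>f. f \<in> F \<Longrightarrow> integrable (mumeas mu) f"
    and Q_conv: "\<And>f y. f \<in> F \<Longrightarrow> (\<lambda>n. (Qop p ^^ n) f y) \<longlonglongrightarrow> pairing mu f"
    and Q_dom: "\<And>f. f \<in> F \<Longrightarrow> \<exists>g\<in>F. \<forall>n y. \<bar>(Qop p ^^ n) f y\<bar> \<le> g y"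
    and V_F: "V \<in> F"
    and V_ge: "\<And>y. 1 \<le> V y"
    and alpha: "0 < \<alpha>" "\<alpha> < 1"
    and geom: "\<And>f n y. f \<in> borel_measurable borel \<Longrightarrow> (\<forall>z. \<bar>f z\<bar> \<le> V z) \<Longrightarrow>
                 \<bar>(Qop p ^^ n) f y - pairing mu f\<bar> \<le> M0 * \<alpha> ^ n * V y"
    \<comment> \<open>(H4)\<close>
    and H4: "\<And>y y0 y1. mu y + qdens p y y0 + p y y0 y1 \<le> C0"
    \<comment> \<open>(H5)\<close>
    and gamma: "0 < \<gamma>" "\<gamma> < 1 / (3 * real DIM('a))"
    and gamma_alpha: "2 * \<alpha>\<^sup>2 < 2 powr (3 * real DIM('a) * \<gamma>)"
    and K0_meas: "K0 \<in> borel_measurable borel"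
    and K0_bdd: "bounded (range K0)"
    and K0_int: "integrable lborel K0"
    and K0_one: "(\<integral>u. K0 u \<partial>lborel) = 1"
    \<comment> \<open>fixed point\<close>
    and mu_x: "0 < mu x"
    \<comment> \<open>the sequence p_n\<close>
    and pp_mono: "\<And>n. 2 \<le> n \<Longrightarrow> pp n \<le> pp (Suc n)"
    and pp_pos: "\<And>n. 2 \<le> n \<Longrightarrow> 0 < pp n"
    and pp_lt: "\<And>n. 2 \<le> n \<Longrightarrow> pp n < n"
    and pp_ratio: "(\<lambda>n. real (pp n) / real n) \<longlonglongrightarrow> 1"
    and pp_log: "\<And>lam. 0 < lam \<Longrightarrow> filterlim (\<lambda>n. real n - real (pp n) - lam * ln (real n)) at_top sequentially"
  shows "(\<lambda>n. \<integral>\<^sup>+ \<omega>. ennreal (R2 X p mu K0 \<gamma> x x0 x1 pp n \<omega>) \<partial>M) \<longlonglongrightarrow> 0"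
proof -
  interpret bounded_density_kernel p mu C0
    by (rule bounded_density_kernel.intro) (fact p_nonneg p_meas p_prob mu_nonneg mu_meas mu_prob H4)+
  interpret geometrically_ergodic_kernel p mu C0 V M0 \<alpha>
    by unfold_locales (fact V_ge alpha geom)+
  interpret bifurcating_markov_chain p mu C0 M X \<nu>
    by unfold_locales (fact bmc)
  interpret kernel_stable_class p F
    by unfold_locales (fact F_meas F_add F_scale F_const F_P_int F_P)+
  obtain B where KB: "\<And>u. \<bar>K0 u\<bar> \<le> B"
    using K0_bdd unfolding bounded_iff by auto
  obtain g where "g \<in> F" and g: "\<And>n y. \<bar>(Qop p ^^ n) (\<lambda>y. (V y)\<^sup>2) y\<bar> \<le> g y"
    using Q_dom[OF F_sq[OF V_F]] by blast
  define \<kappa> where "\<kappa> = 3 * real DIM('a) * \<gamma>"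
  define c where "c n = 2 * B ^ 3 * 2 powr (\<kappa> * real n / 2)
      + real (pp n) * (2 * \<bar>M0\<bar> * (3 * C0 * C0 * (\<integral>u. \<bar>K0 u\<bar> \<partial>lborel) ^ 3 + 1))
        * 2 powr (- (\<kappa> * real n) / 2) * max 1 (2 * \<alpha>) ^ pp n" for n
  show ?thesis
  proof (rule tendsto_nn_integral_R2)
    show "eventually (\<lambda>n. pp n \<le> n) sequentially"
      using eventually_ge_at_top[of 2] by eventually_elim (simp add: less_imp_le pp_lt)
    show "V \<in> borel_measurable borel" using F_meas V_F by blast
    show "\<bar>\<Sum>k=0..pp n. 2 ^ (pp n - k) * (Qop p ^^ (pp n - k)) (Pk p (ftil p mu K0 \<gamma> x x0 x1 n)) y\<bar>
        \<le> c n * V y" for n y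
      unfolding c_def \<kappa>_def by (rule abs_sum_scaled_Qop_funpow_Pk_ftil_le[OF K0_meas KB K0_int])
    show "(\<integral>\<^sup>+\<omega>. (\<Sum>i\<in>Gen m. ennreal ((V (X i \<omega>))\<^sup>2)) \<partial>M) \<le> ennreal (2 ^ m * (\<integral>y. g y \<partial>\<nu>))" for m
      using g[of m]
      by (intro nn_integral_sum_Gen_le_stable_class[OF kernel_stable_class_axioms F_sq[OF V_F]]
          F_nu[OF \<open>g \<in> F\<close>]) (auto intro: order.trans[OF abs_ge_self])
    have "0 < \<kappa>" "\<kappa> < 1"
      using gamma DIM_positive[where 'a='a] by (auto simp: \<kappa>_def field_simps)
    then show "(\<lambda>n. (c n)\<^sup>2 / 2 ^ pp n) \<longlonglongrightarrow> 0"
      unfolding c_def using alpha gamma_alpha pp_ratio \<open>eventually (\<lambda>n. pp n \<le> n) sequentially\<close>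
      by (intro tendsto_bound_sq_div_2pow) (simp_all add: \<kappa>_def)
  qed
qed

end
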